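(* Let $n\ge3$ and let $\{e_{\alpha_i},f_{\alpha_i}\mid 1\leq i\leq n\}$ be Chevalley generators of the simple Lie algebra $\mathfrak{g}$ of type $D_n$, where the simple roots are labeled so that $\alpha_1,\alpha_2,\dots,\alpha_{n-1}$ form the chain $1-2-\cdots-(n-1)$ and $\alpha_n$ is joined (by a single bond) only to $\alpha_2$. Put $$E=[f_{\alpha_{n-1}},[\cdots,[f_{\alpha_2},f_{\alpha_n}]\cdots]],\qquad F=[[\cdots[e_{\alpha_n},e_{\alpha_2}],\cdots],e_{\alpha_{n-1}}].$$ Then there is a Lie algebra homomorphism $\mathrm{gim}(M_n)\to\mathfrak{g}$ with $e_i\mapsto e_{\alpha_i}$, $f_i\mapsto f_{\alpha_i}$ for $1\le i\le n-1$, and $e_n\mapsto E$, $f_n\mapsto F$.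
   Context: For $n\geq 3$, $M_n=(m_{i,j})$ is the $n\times n$ integer matrix with $m_{i,i}=2$, $m_{i,i+1}=m_{i+1,i}=-1$ ($1\le i\le n-1$), $m_{1,n}=m_{n,1}=1$, all other entries $0$. $\mathrm{gim}(M_n)$ is the complex Lie algebra generated by $e_i,f_i,h_i$ ($1\le i\le n$) with relations: (R1) $[h_i,e_j]=m_{i,j}e_j$, $[h_i,f_j]=-m_{i,j}f_j$, $[e_i,f_i]=h_i$ for all $i,j$; (R2) for $i\ne j$ with $m_{i,j}\le0$: $[e_i,f_j]=0=[f_i,e_j]$, $(\mathrm{ad}\,e_i)^{1-m_{i,j}}e_j=0=(\mathrm{ad}\,f_i)^{1-m_{i,j}}f_j$; (R3) for $i\ne j$ with $m_{i,j}>0$: $[e_i,e_j]=0=[f_i,f_j]$, $(\mathrm{ad}\,e_i)^{m_{i,j}+1}f_j=0=(\mathrm{ad}\,f_i)^{m_{i,j}+1}e_j$. *)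

theory Defs
  imports Main "HOL.Complex"
begin

record 'a lie_alg =
  carrier :: "'a set"
  lzero :: 'a
  ladd :: "'a \<Rightarrow> 'a \<Rightarrow> 'a"
  lsmul :: "complex \<Rightarrow> 'a \<Rightarrow> 'a"
  lbr :: "'a \<Rightarrow> 'a \<Rightarrow> 'a"

definition lie_algebra :: "('a, 'b) lie_alg_scheme \<Rightarrow> bool" where
  "lie_algebra L \<longleftrightarrow>
     lzero L \<in> carrier L \<and>
     (\<forall>x\<in>carrier L. \<forall>y\<in>carrier L. ladd L x y \<in> carrier L \<and> lbr L x y \<in> carrier L) \<and>
     (\<forall>c. \<forall>x\<in>carrier L. lsmul L c x \<in> carrier L) \<and>
     (\<forall>x\<in>carrier L. \<forall>y\<in>carrier L. \<forall>z\<in>carrier L.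
        ladd L (ladd L x y) z = ladd L x (ladd L y z)) \<and>
     (\<forall>x\<in>carrier L. \<forall>y\<in>carrier L. ladd L x y = ladd L y x) \<and>
     (\<forall>x\<in>carrier L. ladd L (lzero L) x = x) \<and>
     (\<forall>x\<in>carrier L. ladd L x (lsmul L (-1) x) = lzero L) \<and>
     (\<forall>c. \<forall>x\<in>carrier L. \<forall>y\<in>carrier L. lsmul L c (ladd L x y) = ladd L (lsmul L c x) (lsmul L c y)) \<and>
     (\<forall>c d. \<forall>x\<in>carrier L. lsmul L (c + d) x = ladd L (lsmul L c x) (lsmul L d x)) \<and>
     (\<forall>c d. \<forall>x\<in>carrier L. lsmul L (c * d) x = lsmul L c (lsmul L d x)) \<and>
     (\<forall>x\<in>carrier L. lsmul L 1 x = x) \<and>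
     (\<forall>x\<in>carrier L. \<forall>y\<in>carrier L. \<forall>z\<in>carrier L.
        lbr L (ladd L x y) z = ladd L (lbr L x z) (lbr L y z) \<and>
        lbr L z (ladd L x y) = ladd L (lbr L z x) (lbr L z y)) \<and>
     (\<forall>c. \<forall>x\<in>carrier L. \<forall>y\<in>carrier L.
        lbr L (lsmul L c x) y = lsmul L c (lbr L x y) \<and>
        lbr L x (lsmul L c y) = lsmul L c (lbr L x y)) \<and>
     (\<forall>x\<in>carrier L. lbr L x x = lzero L) \<and>
     (\<forall>x\<in>carrier L. \<forall>y\<in>carrier L. \<forall>z\<in>carrier L.
        ladd L (lbr L x (lbr L y z)) (ladd L (lbr L y (lbr L z x)) (lbr L z (lbr L x y))) = lzero L)"

definition lie_hom :: "('a, 'c) lie_alg_scheme \<Rightarrow> ('b, 'd) lie_alg_scheme \<Rightarrow> ('a \<Rightarrow> 'b) \<Rightarrow> bool" where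
  "lie_hom L M \<phi> \<longleftrightarrow>
     (\<forall>x\<in>carrier L. \<phi> x \<in> carrier M) \<and>
     (\<forall>x\<in>carrier L. \<forall>y\<in>carrier L. \<phi> (ladd L x y) = ladd M (\<phi> x) (\<phi> y)) \<and>
     (\<forall>c. \<forall>x\<in>carrier L. \<phi> (lsmul L c x) = lsmul M c (\<phi> x)) \<and>
     (\<forall>x\<in>carrier L. \<forall>y\<in>carrier L. \<phi> (lbr L x y) = lbr M (\<phi> x) (\<phi> y))"

definition lie_subspace :: "('a, 'b) lie_alg_scheme \<Rightarrow> 'a set \<Rightarrow> bool" where
  "lie_subspace L S \<longleftrightarrow> S \<subseteq> carrier L \<and> lzero L \<in> S \<and>
     (\<forall>x\<in>S. \<forall>y\<in>S. ladd L x y \<in> S) \<and> (\<forall>c. \<forall>x\<in>S. lsmul L c x \<in> S)"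

definition lie_subalgebra :: "('a, 'b) lie_alg_scheme \<Rightarrow> 'a set \<Rightarrow> bool" where
  "lie_subalgebra L S \<longleftrightarrow> lie_subspace L S \<and> (\<forall>x\<in>S. \<forall>y\<in>S. lbr L x y \<in> S)"

definition lie_ideal :: "('a, 'b) lie_alg_scheme \<Rightarrow> 'a set \<Rightarrow> bool" where
  "lie_ideal L I \<longleftrightarrow> lie_subspace L I \<and> (\<forall>x\<in>carrier L. \<forall>y\<in>I. lbr L x y \<in> I)"

definition simple_lie_algebra :: "('a, 'b) lie_alg_scheme \<Rightarrow> bool" where
  "simple_lie_algebra L \<longleftrightarrow> lie_algebra L \<and>
     (\<exists>x\<in>carrier L. \<exists>y\<in>carrier L. lbr L x y \<noteq> lzero L) \<and>
     (\<forall>I. lie_ideal L I \<longrightarrow> I = {lzero L} \<or> I = carrier L)"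

definition lin_comb :: "('a, 'b) lie_alg_scheme \<Rightarrow> (complex \<times> 'a) list \<Rightarrow> 'a" where
  "lin_comb L cbs = foldr (\<lambda>(c, b) acc. ladd L (lsmul L c b) acc) cbs (lzero L)"

definition finite_dim_lie :: "('a, 'b) lie_alg_scheme \<Rightarrow> bool" where
  "finite_dim_lie L \<longleftrightarrow> (\<exists>bs. set bs \<subseteq> carrier L \<and>
     (\<forall>x\<in>carrier L. \<exists>cs. length cs = length bs \<and> x = lin_comb L (zip cs bs)))"

definition generates :: "('a, 'b) lie_alg_scheme \<Rightarrow> 'a set \<Rightarrow> bool" where
  "generates L X \<longleftrightarrow> (\<forall>S. lie_subalgebra L S \<and> X \<subseteq> S \<longrightarrow> S = carrier L)"

definition ad_pow :: "('a, 'b) lie_alg_scheme \<Rightarrow> nat \<Rightarrow> 'a \<Rightarrow> 'a \<Rightarrow> 'a" where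
  "ad_pow L k x y = ((\<lambda>z. lbr L x z) ^^ k) y"

datatype 'g lterm = Gen 'g | TZero | TAdd "'g lterm" "'g lterm"
  | TSmul complex "'g lterm" | TBr "'g lterm" "'g lterm"

text \<open>The smallest congruence containing the relations \<open>R\<close> and making the term
  algebra a complex Lie algebra; the quotient is the Lie algebra presented by
  the generators and the relations \<open>R\<close>.\<close>
inductive lcong :: "('g lterm \<times> 'g lterm) set \<Rightarrow> 'g lterm \<Rightarrow> 'g lterm \<Rightarrow> bool" for R where
  rel: "(s, t) \<in> R \<Longrightarrow> lcong R s t"
| refl: "lcong R t t"
| sym: "lcong R s t \<Longrightarrow> lcong R t s"
| trans: "lcong R s t \<Longrightarrow> lcong R t u \<Longrightarrow> lcong R s u"
| cong_add: "lcong R s s' \<Longrightarrow> lcong R t t' \<Longrightarrow> lcong R (TAdd s t) (TAdd s' t')"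
| cong_smul: "lcong R s s' \<Longrightarrow> lcong R (TSmul c s) (TSmul c s')"
| cong_br: "lcong R s s' \<Longrightarrow> lcong R t t' \<Longrightarrow> lcong R (TBr s t) (TBr s' t')"
| add_assoc: "lcong R (TAdd (TAdd s t) u) (TAdd s (TAdd t u))"
| add_comm: "lcong R (TAdd s t) (TAdd t s)"
| add_zero: "lcong R (TAdd TZero s) s"
| add_neg: "lcong R (TAdd s (TSmul (-1) s)) TZero"
| smul_add: "lcong R (TSmul c (TAdd s t)) (TAdd (TSmul c s) (TSmul c t))"
| add_smul: "lcong R (TSmul (c + d) s) (TAdd (TSmul c s) (TSmul d s))"
| smul_smul: "lcong R (TSmul (c * d) s) (TSmul c (TSmul d s))"
| smul_one: "lcong R (TSmul 1 s) s"
| br_add_left: "lcong R (TBr (TAdd s t) u) (TAdd (TBr s u) (TBr t u))"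
| br_add_right: "lcong R (TBr u (TAdd s t)) (TAdd (TBr u s) (TBr u t))"
| br_smul_left: "lcong R (TBr (TSmul c s) t) (TSmul c (TBr s t))"
| br_smul_right: "lcong R (TBr s (TSmul c t)) (TSmul c (TBr s t))"
| br_alt: "lcong R (TBr s s) TZero"
| jacobi: "lcong R (TAdd (TBr s (TBr t u)) (TAdd (TBr t (TBr u s)) (TBr u (TBr s t)))) TZero"

definition lclass :: "('g lterm \<times> 'g lterm) set \<Rightarrow> 'g lterm \<Rightarrow> 'g lterm set" where
  "lclass R t = {s. lcong R t s}"

definition presented_lie :: "('g lterm \<times> 'g lterm) set \<Rightarrow> 'g lterm set lie_alg" where
  "presented_lie R = \<lparr> carrier = range (lclass R),
     lzero = lclass R TZero,
     ladd = (\<lambda>A B. \<Union>a\<in>A. \<Union>b\<in>B. lclass R (TAdd a b)),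
     lsmul = (\<lambda>c A. \<Union>a\<in>A. lclass R (TSmul c a)),
     lbr = (\<lambda>A B. \<Union>a\<in>A. \<Union>b\<in>B. lclass R (TBr a b)) \<rparr>"

datatype gim_gen = GE nat | GF nat | GH nat

definition tad_pow :: "nat \<Rightarrow> 'g lterm \<Rightarrow> 'g lterm \<Rightarrow> 'g lterm" where
  "tad_pow k x y = ((\<lambda>z. TBr x z) ^^ k) y"

definition gim_rels :: "nat \<Rightarrow> (nat \<Rightarrow> nat \<Rightarrow> int) \<Rightarrow> (gim_gen lterm \<times> gim_gen lterm) set" where
  "gim_rels n m =
     {(TBr (Gen (GH i)) (Gen (GE j)), TSmul (of_int (m i j)) (Gen (GE j))) | i j. i \<in> {1..n} \<and> j \<in> {1..n}} \<union>
     {(TBr (Gen (GH i)) (Gen (GF j)), TSmul (of_int (- m i j)) (Gen (GF j))) | i j. i \<in> {1..n} \<and> j \<in> {1..n}} \<union>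
     {(TBr (Gen (GE i)) (Gen (GF i)), Gen (GH i)) | i. i \<in> {1..n}} \<union>
     {(TBr (Gen (GE i)) (Gen (GF j)), TZero) | i j. i \<in> {1..n} \<and> j \<in> {1..n} \<and> i \<noteq> j \<and> m i j \<le> 0} \<union>
     {(TBr (Gen (GF i)) (Gen (GE j)), TZero) | i j. i \<in> {1..n} \<and> j \<in> {1..n} \<and> i \<noteq> j \<and> m i j \<le> 0} \<union>
     {(tad_pow (nat (1 - m i j)) (Gen (GE i)) (Gen (GE j)), TZero) | i j. i \<in> {1..n} \<and> j \<in> {1..n} \<and> i \<noteq> j \<and> m i j \<le> 0} \<union>
     {(tad_pow (nat (1 - m i j)) (Gen (GF i)) (Gen (GF j)), TZero) | i j. i \<in> {1..n} \<and> j \<in> {1..n} \<and> i \<noteq> j \<and> m i j \<le> 0} \<union>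
     {(TBr (Gen (GE i)) (Gen (GE j)), TZero) | i j. i \<in> {1..n} \<and> j \<in> {1..n} \<and> i \<noteq> j \<and> m i j > 0} \<union>
     {(TBr (Gen (GF i)) (Gen (GF j)), TZero) | i j. i \<in> {1..n} \<and> j \<in> {1..n} \<and> i \<noteq> j \<and> m i j > 0} \<union>
     {(tad_pow (nat (m i j + 1)) (Gen (GE i)) (Gen (GF j)), TZero) | i j. i \<in> {1..n} \<and> j \<in> {1..n} \<and> i \<noteq> j \<and> m i j > 0} \<union>
     {(tad_pow (nat (m i j + 1)) (Gen (GF i)) (Gen (GE j)), TZero) | i j. i \<in> {1..n} \<and> j \<in> {1..n} \<and> i \<noteq> j \<and> m i j > 0}"

definition gim :: "nat \<Rightarrow> (nat \<Rightarrow> nat \<Rightarrow> int) \<Rightarrow> gim_gen lterm set lie_alg" where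
  "gim n m = presented_lie (gim_rels n m)"

definition gim_gen_elt :: "nat \<Rightarrow> (nat \<Rightarrow> nat \<Rightarrow> int) \<Rightarrow> gim_gen \<Rightarrow> gim_gen lterm set" where
  "gim_gen_elt n m x = lclass (gim_rels n m) (Gen x)"

definition M_mat :: "nat \<Rightarrow> nat \<Rightarrow> nat \<Rightarrow> int" where
  "M_mat n i j = (if i = j then 2
     else if (i = 1 \<and> j = n) \<or> (i = n \<and> j = 1) then 1
     else if i + 1 = j \<or> j + 1 = i then -1 else 0)"

definition D_cartan :: "nat \<Rightarrow> nat \<Rightarrow> nat \<Rightarrow> int" where
  "D_cartan n i j = (if i = j then 2
     else if (i + 1 = j \<or> j + 1 = i) \<and> i < n \<and> j < n then -1
     else if (i = 2 \<and> j = n) \<or> (i = n \<and> j = 2) then -1 else 0)"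

definition chevalley_generators ::
  "('a, 'b) lie_alg_scheme \<Rightarrow> nat \<Rightarrow> (nat \<Rightarrow> nat \<Rightarrow> int) \<Rightarrow> (nat \<Rightarrow> 'a) \<Rightarrow> (nat \<Rightarrow> 'a) \<Rightarrow> (nat \<Rightarrow> 'a) \<Rightarrow> bool" where
  "chevalley_generators L n A e f h \<longleftrightarrow>
     simple_lie_algebra L \<and> finite_dim_lie L \<and>
     (\<forall>i\<in>{1..n}. e i \<in> carrier L \<and> f i \<in> carrier L \<and> h i \<in> carrier L) \<and>
     generates L (e ` {1..n} \<union> f ` {1..n}) \<and>
     (\<forall>i\<in>{1..n}. \<forall>j\<in>{1..n}.
        lbr L (h i) (h j) = lzero L \<and>
        lbr L (e i) (f j) = (if i = j then h i else lzero L) \<and>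
        lbr L (h i) (e j) = lsmul L (of_int (A i j)) (e j) \<and>
        lbr L (h i) (f j) = lsmul L (of_int (- A i j)) (f j) \<and>
        (i \<noteq> j \<longrightarrow> ad_pow L (nat (1 - A i j)) (e i) (e j) = lzero L \<and>
                   ad_pow L (nat (1 - A i j)) (f i) (f j) = lzero L))"

end

theory Submission
  imports Defs
begin

(*
  Put \<beta> = \<alpha>\<^sub>n + \<alpha>\<^sub>2 + \<dots> + \<alpha>\<^sub>n\<^sub>-\<^sub>1. The nested bracket E = [f\<^sub>n\<^sub>-\<^sub>1, [\<dots>, [f\<^sub>2, f\<^sub>n]]] is a root vector
  of weight -\<beta>, F = [[[e\<^sub>n, e\<^sub>2], \<dots>], e\<^sub>n\<^sub>-\<^sub>1] one of weight \<beta>, and [E, F] = -(h\<^sub>n + h\<^sub>2 + \<dots> + h\<^sub>n\<^sub>-\<^sub>1).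
  For i < n the pairing \<langle>\<beta>, \<alpha>\<^sub>i\<^sup>\<or>\<rangle> is -1, 0 or 1 according as i = 1, 2 \<le> i < n - 1 or i = n - 1,
  which is -m\<^sub>i\<^sub>,\<^sub>n; this gives the relations (R1). The remaining relations, e.g. (ad e\<^sub>1)\<^sup>2 F = 0
  for the positive entry m\<^sub>1\<^sub>,\<^sub>n = 1, are proved by induction along the nested brackets from the
  Serre relations of g and the Jacobi identity alone. Reversing the bracket exchanges the roles
  of the e\<^sub>i and the f\<^sub>i, so each statement about F is obtained from the corresponding one
  about E. The universal property of the presented algebra gim(M\<^sub>n) then yields the homomorphism.
*)

section \<open>Identities in a complex Lie algebra\<close>

locale lie =
  fixes L :: "('a, 'b) lie_alg_scheme" (structure)
  assumes lie_algebra: "lie_algebra L"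
begin

abbreviation bracket :: "'a \<Rightarrow> 'a \<Rightarrow> 'a" ("\<lbrakk>_,/ _\<rbrakk>") where "\<lbrakk>x, y\<rbrakk> \<equiv> lbr L x y"
abbreviation plus_L :: "'a \<Rightarrow> 'a \<Rightarrow> 'a" (infixl "\<oplus>" 65) where "x \<oplus> y \<equiv> ladd L x y"
abbreviation smult_L :: "complex \<Rightarrow> 'a \<Rightarrow> 'a" (infixr "\<odot>" 75) where "c \<odot> x \<equiv> lsmul L c x"
abbreviation zero_L :: 'a ("\<zero>") where "\<zero> \<equiv> lzero L"

lemma zero_closed [simp]: "\<zero> \<in> carrier L"
  using lie_algebra unfolding lie_algebra_def by (elim conjE) meson

lemma add_closed [simp]: "x \<in> carrier L \<Longrightarrow> y \<in> carrier L \<Longrightarrow> x \<oplus> y \<in> carrier L"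
  using lie_algebra unfolding lie_algebra_def by (elim conjE) meson

lemma bracket_closed [simp]: "x \<in> carrier L \<Longrightarrow> y \<in> carrier L \<Longrightarrow> \<lbrakk>x, y\<rbrakk> \<in> carrier L"
  using lie_algebra unfolding lie_algebra_def by (elim conjE) meson

lemma smult_closed [simp]: "x \<in> carrier L \<Longrightarrow> c \<odot> x \<in> carrier L"
  using lie_algebra unfolding lie_algebra_def by (elim conjE) meson

lemma add_assoc: "x \<in> carrier L \<Longrightarrow> y \<in> carrier L \<Longrightarrow> z \<in> carrier L \<Longrightarrow> x \<oplus> y \<oplus> z = x \<oplus> (y \<oplus> z)"
  using lie_algebra unfolding lie_algebra_def by (elim conjE) meson

lemma add_commute: "x \<in> carrier L \<Longrightarrow> y \<in> carrier L \<Longrightarrow> x \<oplus> y = y \<oplus> x"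
  using lie_algebra unfolding lie_algebra_def by (elim conjE) meson

lemma zero_add [simp]: "x \<in> carrier L \<Longrightarrow> \<zero> \<oplus> x = x"
  using lie_algebra unfolding lie_algebra_def by (elim conjE) meson

lemma add_zero [simp]: "x \<in> carrier L \<Longrightarrow> x \<oplus> \<zero> = x"
  using add_commute[of x \<zero>] by simp

lemma add_neg: "x \<in> carrier L \<Longrightarrow> x \<oplus> (-1) \<odot> x = \<zero>"
  using lie_algebra unfolding lie_algebra_def by (elim conjE) meson

lemma smult_add_right: "x \<in> carrier L \<Longrightarrow> y \<in> carrier L \<Longrightarrow> c \<odot> (x \<oplus> y) = c \<odot> x \<oplus> c \<odot> y"
  using lie_algebra unfolding lie_algebra_def by (elim conjE) meson

lemma smult_add_left: "x \<in> carrier L \<Longrightarrow> (c + d) \<odot> x = c \<odot> x \<oplus> d \<odot> x"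
  using lie_algebra unfolding lie_algebra_def by (elim conjE) meson

lemma smult_smult [simp]: "x \<in> carrier L \<Longrightarrow> c \<odot> d \<odot> x = (c * d) \<odot> x"
  using lie_algebra unfolding lie_algebra_def by (elim conjE) (metis (no_types))

lemma smult_one [simp]: "x \<in> carrier L \<Longrightarrow> 1 \<odot> x = x"
  using lie_algebra unfolding lie_algebra_def by (elim conjE) meson

lemma bracket_add_left:
  "x \<in> carrier L \<Longrightarrow> y \<in> carrier L \<Longrightarrow> z \<in> carrier L \<Longrightarrow> \<lbrakk>x \<oplus> y, z\<rbrakk> = \<lbrakk>x, z\<rbrakk> \<oplus> \<lbrakk>y, z\<rbrakk>"
  using lie_algebra unfolding lie_algebra_def by (elim conjE) meson

lemma bracket_add_right:
  "x \<in> carrier L \<Longrightarrow> y \<in> carrier L \<Longrightarrow> z \<in> carrier L \<Longrightarrow> \<lbrakk>z, x \<oplus> y\<rbrakk> = \<lbrakk>z, x\<rbrakk> \<oplus> \<lbrakk>z, y\<rbrakk>"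
  using lie_algebra unfolding lie_algebra_def by (elim conjE) meson

lemma bracket_smult_left [simp]: "x \<in> carrier L \<Longrightarrow> y \<in> carrier L \<Longrightarrow> \<lbrakk>c \<odot> x, y\<rbrakk> = c \<odot> \<lbrakk>x, y\<rbrakk>"
  using lie_algebra unfolding lie_algebra_def by (elim conjE) meson

lemma bracket_smult_right [simp]: "x \<in> carrier L \<Longrightarrow> y \<in> carrier L \<Longrightarrow> \<lbrakk>x, c \<odot> y\<rbrakk> = c \<odot> \<lbrakk>x, y\<rbrakk>"
  using lie_algebra unfolding lie_algebra_def by (elim conjE) meson

lemma bracket_self [simp]: "x \<in> carrier L \<Longrightarrow> \<lbrakk>x, x\<rbrakk> = \<zero>"
  using lie_algebra unfolding lie_algebra_def by (elim conjE) meson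

lemma jacobi: "x \<in> carrier L \<Longrightarrow> y \<in> carrier L \<Longrightarrow> z \<in> carrier L \<Longrightarrow>
  \<lbrakk>x, \<lbrakk>y, z\<rbrakk>\<rbrakk> \<oplus> (\<lbrakk>y, \<lbrakk>z, x\<rbrakk>\<rbrakk> \<oplus> \<lbrakk>z, \<lbrakk>x, y\<rbrakk>\<rbrakk>) = \<zero>"
  using lie_algebra unfolding lie_algebra_def by (elim conjE) meson

lemma add_left_cancel:
  assumes "x \<in> carrier L" "y \<in> carrier L" "z \<in> carrier L" "x \<oplus> y = x \<oplus> z"
  shows "y = z"
proof -
  have cancel: "(-1) \<odot> x \<oplus> (x \<oplus> w) = w" if "w \<in> carrier L" for w
  proof -
    have "(-1) \<odot> x \<oplus> (x \<oplus> w) = (x \<oplus> (-1) \<odot> x) \<oplus> w"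
      using assms that add_assoc[of "(-1) \<odot> x" x w] add_commute[of "(-1) \<odot> x" x] by simp
    then show ?thesis using add_neg assms that by simp
  qed
  show ?thesis using cancel[of y] cancel[of z] assms by metis
qed

lemma smult_zero_left [simp]: "x \<in> carrier L \<Longrightarrow> 0 \<odot> x = \<zero>"
  using add_left_cancel[of "0 \<odot> x" "0 \<odot> x" \<zero>] smult_add_left[of x 0 0] by simp

lemma smult_zero_right [simp]: "c \<odot> \<zero> = \<zero>"
  using smult_smult[of \<zero> c 0] by simp

lemma bracket_zero_left [simp]: "x \<in> carrier L \<Longrightarrow> \<lbrakk>\<zero>, x\<rbrakk> = \<zero>"
  using bracket_smult_left[of x x 0] by simp

lemma bracket_zero_right [simp]: "x \<in> carrier L \<Longrightarrow> \<lbrakk>x, \<zero>\<rbrakk> = \<zero>"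
  using bracket_smult_right[of x x 0] by simp

lemma add_eq_zero_neg_right: "x \<in> carrier L \<Longrightarrow> y \<in> carrier L \<Longrightarrow> x \<oplus> y = \<zero> \<Longrightarrow> y = (-1) \<odot> x"
  using add_left_cancel[of x y "(-1) \<odot> x"] add_neg by simp

lemma add_eq_zero_neg_left: "x \<in> carrier L \<Longrightarrow> y \<in> carrier L \<Longrightarrow> x \<oplus> y = \<zero> \<Longrightarrow> x = (-1) \<odot> y"
  using add_eq_zero_neg_right[of y x] add_commute[of x y] by simp

lemma bracket_antisym: "x \<in> carrier L \<Longrightarrow> y \<in> carrier L \<Longrightarrow> \<lbrakk>x, y\<rbrakk> = (-1) \<odot> \<lbrakk>y, x\<rbrakk>"
  using bracket_self[of "y \<oplus> x"] bracket_add_left[of y x "y \<oplus> x"]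
    bracket_add_right[of y x y] bracket_add_right[of y x x]
  by (simp add: add_eq_zero_neg_right)

lemma bracket_zero_commute: "x \<in> carrier L \<Longrightarrow> y \<in> carrier L \<Longrightarrow> \<lbrakk>x, y\<rbrakk> = \<zero> \<Longrightarrow> \<lbrakk>y, x\<rbrakk> = \<zero>"
  using bracket_antisym[of y x] by simp

lemma bracket_leibniz:
  assumes "x \<in> carrier L" "y \<in> carrier L" "z \<in> carrier L"
  shows "\<lbrakk>x, \<lbrakk>y, z\<rbrakk>\<rbrakk> = \<lbrakk>\<lbrakk>x, y\<rbrakk>, z\<rbrakk> \<oplus> \<lbrakk>y, \<lbrakk>x, z\<rbrakk>\<rbrakk>"
proof -
  define a b c where "a = \<lbrakk>x, \<lbrakk>y, z\<rbrakk>\<rbrakk>" and "b = \<lbrakk>\<lbrakk>x, y\<rbrakk>, z\<rbrakk>" and "c = \<lbrakk>y, \<lbrakk>x, z\<rbrakk>\<rbrakk>"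
  have abc: "a \<in> carrier L" "b \<in> carrier L" "c \<in> carrier L"
    using assms by (simp_all add: a_def b_def c_def)
  have "\<lbrakk>y, \<lbrakk>z, x\<rbrakk>\<rbrakk> = (-1) \<odot> c" "\<lbrakk>z, \<lbrakk>x, y\<rbrakk>\<rbrakk> = (-1) \<odot> b"
    unfolding b_def c_def using assms bracket_antisym[of z x] bracket_antisym[of z "\<lbrakk>x, y\<rbrakk>"] by simp_all
  then have "a \<oplus> (-1) \<odot> (c \<oplus> b) = \<zero>"
    using jacobi[OF assms] abc unfolding a_def by (simp add: smult_add_right)
  then have "(-1) \<odot> (c \<oplus> b) = (-1) \<odot> a" using add_eq_zero_neg_right abc by simp
  then have "(-1) \<odot> (-1) \<odot> (c \<oplus> b) = (-1) \<odot> (-1) \<odot> a" by simp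
  then have "a = c \<oplus> b" using abc by simp
  then show ?thesis using abc add_commute[of c b] unfolding a_def b_def c_def by simp
qed

lemma add_self_eq_zero: assumes "x \<in> carrier L" "x \<oplus> x = \<zero>" shows "x = \<zero>"
proof -
  have "2 \<odot> x = \<zero>" using smult_add_left[of x 1 1] assms by (simp add: one_add_one)
  then have "(1/2) \<odot> 2 \<odot> x = \<zero>" by simp
  then show ?thesis using assms by simp
qed

lemma eq_neg_self_imp_zero: "x \<in> carrier L \<Longrightarrow> x = (-1) \<odot> x \<Longrightarrow> x = \<zero>"
  using add_neg[of x] add_self_eq_zero[of x] by simp

lemma bracket_swap_twice: "a \<in> carrier L \<Longrightarrow> q \<in> carrier L \<Longrightarrow> \<lbrakk>\<lbrakk>q, a\<rbrakk>, a\<rbrakk> = \<lbrakk>a, \<lbrakk>a, q\<rbrakk>\<rbrakk>"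
  using bracket_antisym[of q a] bracket_antisym[of "\<lbrakk>a, q\<rbrakk>" a] by simp

lemma centralizer_bracket_closed:
  assumes "a \<in> carrier L" "u \<in> carrier L" "v \<in> carrier L" "\<lbrakk>a, u\<rbrakk> = \<zero>" "\<lbrakk>a, v\<rbrakk> = \<zero>"
  shows "\<lbrakk>a, \<lbrakk>u, v\<rbrakk>\<rbrakk> = \<zero>"
  using bracket_leibniz[of a u v] assms by simp

lemma ad_sq_bracket_right_centralized:
  assumes "a \<in> carrier L" "u \<in> carrier L" "v \<in> carrier L" "\<lbrakk>a, v\<rbrakk> = \<zero>"
  shows "\<lbrakk>a, \<lbrakk>a, \<lbrakk>u, v\<rbrakk>\<rbrakk>\<rbrakk> = \<lbrakk>\<lbrakk>a, \<lbrakk>a, u\<rbrakk>\<rbrakk>, v\<rbrakk>"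
  using bracket_leibniz[of a u v] bracket_leibniz[of a "\<lbrakk>a, u\<rbrakk>" v] assms by simp

lemma ad_sq_bracket_left_centralized:
  assumes "a \<in> carrier L" "u \<in> carrier L" "v \<in> carrier L" "\<lbrakk>a, u\<rbrakk> = \<zero>"
  shows "\<lbrakk>a, \<lbrakk>a, \<lbrakk>u, v\<rbrakk>\<rbrakk>\<rbrakk> = \<lbrakk>u, \<lbrakk>a, \<lbrakk>a, v\<rbrakk>\<rbrakk>\<rbrakk>"
  using bracket_leibniz[of a u v] bracket_leibniz[of a u "\<lbrakk>a, v\<rbrakk>"] assms by simp

text \<open>Expanding \<open>ad\<^sub>a\<^sup>2 [u, v]\<close> by the Leibniz rule leaves \<open>2 [ad\<^sub>a u, ad\<^sub>a v]\<close>.\<close>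

lemma bracket_ad_ad_zero:
  assumes carrier: "a \<in> carrier L" "u \<in> carrier L" "v \<in> carrier L"
    and "\<lbrakk>a, \<lbrakk>a, u\<rbrakk>\<rbrakk> = \<zero>" "\<lbrakk>a, \<lbrakk>a, v\<rbrakk>\<rbrakk> = \<zero>" "\<lbrakk>a, \<lbrakk>a, \<lbrakk>u, v\<rbrakk>\<rbrakk>\<rbrakk> = \<zero>"
  shows "\<lbrakk>\<lbrakk>a, u\<rbrakk>, \<lbrakk>a, v\<rbrakk>\<rbrakk> = \<zero>"
proof -
  let ?t = "\<lbrakk>\<lbrakk>a, u\<rbrakk>, \<lbrakk>a, v\<rbrakk>\<rbrakk>"
  have "\<zero> = \<lbrakk>a, \<lbrakk>\<lbrakk>a, u\<rbrakk>, v\<rbrakk> \<oplus> \<lbrakk>u, \<lbrakk>a, v\<rbrakk>\<rbrakk>\<rbrakk>"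
    using assms bracket_leibniz[of a u v] by simp
  also have "\<dots> = \<lbrakk>a, \<lbrakk>\<lbrakk>a, u\<rbrakk>, v\<rbrakk>\<rbrakk> \<oplus> \<lbrakk>a, \<lbrakk>u, \<lbrakk>a, v\<rbrakk>\<rbrakk>\<rbrakk>"
    using carrier by (intro bracket_add_right) simp_all
  also have "\<dots> = ?t \<oplus> ?t"
    using assms bracket_leibniz[of a "\<lbrakk>a, u\<rbrakk>" v] bracket_leibniz[of a u "\<lbrakk>a, v\<rbrakk>"] by simp
  finally show ?thesis using add_self_eq_zero carrier by simp
qed

lemma bracket_weight_add:
  assumes "h \<in> carrier L" "u \<in> carrier L" "v \<in> carrier L" "\<lbrakk>h, u\<rbrakk> = c \<odot> u" "\<lbrakk>h, v\<rbrakk> = d \<odot> v"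
  shows "\<lbrakk>h, \<lbrakk>u, v\<rbrakk>\<rbrakk> = (c + d) \<odot> \<lbrakk>u, v\<rbrakk>"
  using bracket_leibniz[of h u v] smult_add_left[of "\<lbrakk>u, v\<rbrakk>" c d] assms by simp

text \<open>The next two identities are the induction steps that carry Serre-type relations from
  \<open>X\<close> to \<open>[a, X]\<close> along the nested brackets.\<close>

lemma ad_a_ad_b_ad_a_zero:
  assumes carrier: "a \<in> carrier L" "b \<in> carrier L" "X \<in> carrier L"
    and aaX: "\<lbrakk>a, \<lbrakk>a, X\<rbrakk>\<rbrakk> = \<zero>" and bX: "\<lbrakk>b, X\<rbrakk> = \<zero>" and aab: "\<lbrakk>a, \<lbrakk>a, b\<rbrakk>\<rbrakk> = \<zero>"
  shows "\<lbrakk>a, \<lbrakk>b, \<lbrakk>a, X\<rbrakk>\<rbrakk>\<rbrakk> = \<zero>"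
proof -
  define U where "U = \<lbrakk>a, X\<rbrakk>"
  define Y where "Y = \<lbrakk>a, b\<rbrakk>"
  have UY: "U \<in> carrier L" "Y \<in> carrier L" using carrier by (simp_all add: U_def Y_def)
  have abU: "\<lbrakk>a, \<lbrakk>b, U\<rbrakk>\<rbrakk> = \<lbrakk>Y, U\<rbrakk>"
    using bracket_leibniz[of a b U] carrier UY aaX unfolding U_def Y_def by simp
  have Ya: "\<lbrakk>Y, a\<rbrakk> = \<zero>" using bracket_antisym[of Y a] carrier aab Y_def by simp
  have "\<zero> = \<lbrakk>Y, X\<rbrakk> \<oplus> \<lbrakk>b, U\<rbrakk>"
    using bracket_leibniz[of a b X] bX carrier unfolding Y_def U_def by simp
  then have YX: "\<lbrakk>Y, X\<rbrakk> = (-1) \<odot> \<lbrakk>b, U\<rbrakk>" using add_eq_zero_neg_left carrier UY by simp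
  have "\<lbrakk>Y, U\<rbrakk> = (-1) \<odot> \<lbrakk>a, \<lbrakk>b, U\<rbrakk>\<rbrakk>"
    using bracket_leibniz[of Y a X] Ya YX carrier UY unfolding U_def by simp
  then show ?thesis using eq_neg_self_imp_zero abU carrier UY unfolding U_def by simp
qed

lemma bracket_ad_a_ad_b_ad_a_zero:
  assumes carrier: "a \<in> carrier L" "b \<in> carrier L" "X \<in> carrier L"
    and bX: "\<lbrakk>b, X\<rbrakk> = \<zero>" and aab: "\<lbrakk>a, \<lbrakk>a, b\<rbrakk>\<rbrakk> = \<zero>" and XaX: "\<lbrakk>X, \<lbrakk>a, X\<rbrakk>\<rbrakk> = \<zero>"
  shows "\<lbrakk>\<lbrakk>a, X\<rbrakk>, \<lbrakk>b, \<lbrakk>a, X\<rbrakk>\<rbrakk>\<rbrakk> = \<zero>"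
proof -
  define U c W where "U = \<lbrakk>a, X\<rbrakk>" and "c = \<lbrakk>b, a\<rbrakk>" and "W = \<lbrakk>c, X\<rbrakk>"
  have UcW: "U \<in> carrier L" "c \<in> carrier L" "W \<in> carrier L"
    using carrier by (simp_all add: U_def c_def W_def)
  have bU: "\<lbrakk>b, U\<rbrakk> = W"
    using bracket_leibniz[of b a X] carrier bX unfolding U_def W_def c_def by simp
  have UX: "\<lbrakk>U, X\<rbrakk> = \<zero>" using bracket_zero_commute[of X U] carrier UcW XaX U_def by simp
  have "\<lbrakk>a, c\<rbrakk> = (-1) \<odot> \<lbrakk>a, \<lbrakk>a, b\<rbrakk>\<rbrakk>"
    unfolding c_def using bracket_antisym[of b a] carrier by simp
  then have ca: "\<lbrakk>c, a\<rbrakk> = \<zero>" using aab bracket_zero_commute[of a c] carrier UcW by simp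
  have cU: "\<lbrakk>c, U\<rbrakk> = \<lbrakk>a, W\<rbrakk>"
    using bracket_leibniz[of c a X] carrier UcW ca unfolding U_def W_def by simp
  have "\<lbrakk>U, c\<rbrakk> = (-1) \<odot> \<lbrakk>a, W\<rbrakk>" using bracket_antisym[of U c] cU carrier UcW by simp
  then have UW: "\<lbrakk>U, W\<rbrakk> = (-1) \<odot> \<lbrakk>\<lbrakk>a, W\<rbrakk>, X\<rbrakk>"
    using bracket_leibniz[of U c X] carrier UcW UX unfolding W_def by simp
  have Xb: "\<lbrakk>X, b\<rbrakk> = \<zero>" using bracket_zero_commute[OF _ _ bX] carrier by simp
  have XU: "\<lbrakk>X, U\<rbrakk> = \<zero>" using bracket_zero_commute[OF _ _ UX] carrier UcW by simp
  have XW: "\<lbrakk>X, W\<rbrakk> = \<zero>" using bracket_leibniz[of X b U] carrier UcW Xb XU bU by simp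
  have Xa: "\<lbrakk>X, a\<rbrakk> = (-1) \<odot> U" using bracket_antisym[of X a] carrier U_def by simp
  have "\<lbrakk>X, \<lbrakk>a, W\<rbrakk>\<rbrakk> = (-1) \<odot> \<lbrakk>U, W\<rbrakk>"
    using bracket_leibniz[of X a W] carrier UcW XW Xa by simp
  then have "\<lbrakk>\<lbrakk>a, W\<rbrakk>, X\<rbrakk> = \<lbrakk>U, W\<rbrakk>"
    using bracket_antisym[of "\<lbrakk>a, W\<rbrakk>" X] carrier UcW by simp
  then show ?thesis using eq_neg_self_imp_zero[of "\<lbrakk>U, W\<rbrakk>"] UW bU carrier UcW U_def by simp
qed

end

lemma ad_pow_Suc_0: "ad_pow L (Suc 0) a b = lbr L a b"
  unfolding ad_pow_def by simp

lemma ad_pow_2: "ad_pow L 2 a b = lbr L a (lbr L a b)"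
  unfolding ad_pow_def by (simp add: numeral_2_eq_2)

definition opposite_lie :: "('a, 'b) lie_alg_scheme \<Rightarrow> ('a, 'b) lie_alg_scheme" where
  "opposite_lie L = L\<lparr>lbr := (\<lambda>x y. lbr L y x)\<rparr>"

lemma opposite_lie_simps [simp]:
  "carrier (opposite_lie L) = carrier L" "lzero (opposite_lie L) = lzero L"
  "ladd (opposite_lie L) = ladd L" "lsmul (opposite_lie L) = lsmul L"
  "lbr (opposite_lie L) x y = lbr L y x"
  unfolding opposite_lie_def by simp_all

lemma (in lie) lie_algebra_opposite: "lie_algebra (opposite_lie L)"
proof -
  have cyclic: "\<lbrakk>\<lbrakk>z, y\<rbrakk>, x\<rbrakk> = \<lbrakk>x, \<lbrakk>y, z\<rbrakk>\<rbrakk>"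
    if "x \<in> carrier L" "y \<in> carrier L" "z \<in> carrier L" for x y z
    using bracket_antisym[of "\<lbrakk>z, y\<rbrakk>" x] bracket_antisym[of z y] that by simp
  have "\<lbrakk>\<lbrakk>z, y\<rbrakk>, x\<rbrakk> \<oplus> (\<lbrakk>\<lbrakk>x, z\<rbrakk>, y\<rbrakk> \<oplus> \<lbrakk>\<lbrakk>y, x\<rbrakk>, z\<rbrakk>) = \<zero>"
    if "x \<in> carrier L" "y \<in> carrier L" "z \<in> carrier L" for x y z
    using jacobi[of x y z] cyclic[of x y z] cyclic[of y z x] cyclic[of z x y] that by simp
  then show ?thesis
    unfolding lie_algebra_def opposite_lie_simps
    by (auto simp: add_assoc add_neg smult_add_right smult_add_left bracket_add_left bracket_add_right
        intro: add_commute)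
qed

section \<open>Presented Lie algebras\<close>

primrec eval_lterm :: "('a, 'b) lie_alg_scheme \<Rightarrow> ('g \<Rightarrow> 'a) \<Rightarrow> 'g lterm \<Rightarrow> 'a" where
  "eval_lterm M \<gamma> (Gen x) = \<gamma> x"
| "eval_lterm M \<gamma> TZero = lzero M"
| "eval_lterm M \<gamma> (TAdd s t) = ladd M (eval_lterm M \<gamma> s) (eval_lterm M \<gamma> t)"
| "eval_lterm M \<gamma> (TSmul c s) = lsmul M c (eval_lterm M \<gamma> s)"
| "eval_lterm M \<gamma> (TBr s t) = lbr M (eval_lterm M \<gamma> s) (eval_lterm M \<gamma> t)"

lemma eval_lterm_tad_pow:
  "eval_lterm M \<gamma> (tad_pow k s t) = ad_pow M k (eval_lterm M \<gamma> s) (eval_lterm M \<gamma> t)"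
  unfolding tad_pow_def ad_pow_def by (induction k) auto

lemma lclass_self: "t \<in> lclass R t"
  unfolding lclass_def by (simp add: lcong.refl)

lemma lclass_eqI: "lcong R s t \<Longrightarrow> lclass R s = lclass R t"
  unfolding lclass_def by (auto intro: lcong.trans lcong.sym)

lemma UNION_lclass_const:
  "(\<And>s'. lcong R s s' \<Longrightarrow> F s' = X) \<Longrightarrow> (\<Union>s'\<in>lclass R s. F s') = X"
  using lclass_self[of s R] unfolding lclass_def by auto

lemma presented_lie_add: "ladd (presented_lie R) (lclass R s) (lclass R t) = lclass R (TAdd s t)"
  unfolding presented_lie_def
  by (auto intro!: UNION_lclass_const lclass_eqI[symmetric] lcong.cong_add)

lemma presented_lie_bracket: "lbr (presented_lie R) (lclass R s) (lclass R t) = lclass R (TBr s t)"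
  unfolding presented_lie_def
  by (auto intro!: UNION_lclass_const lclass_eqI[symmetric] lcong.cong_br)

lemma presented_lie_smult: "lsmul (presented_lie R) c (lclass R s) = lclass R (TSmul c s)"
  unfolding presented_lie_def
  by (auto intro!: UNION_lclass_const lclass_eqI[symmetric] lcong.cong_smul)

context lie
begin

lemma eval_lterm_closed: "(\<And>x. \<gamma> x \<in> carrier L) \<Longrightarrow> eval_lterm L \<gamma> t \<in> carrier L"
  by (induction t) auto

lemma eval_lterm_lcong:
  assumes closed: "\<And>x. \<gamma> x \<in> carrier L"
    and rel: "\<And>s t. (s, t) \<in> R \<Longrightarrow> eval_lterm L \<gamma> s = eval_lterm L \<gamma> t"
    and "lcong R s t"
  shows "eval_lterm L \<gamma> s = eval_lterm L \<gamma> t"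
proof -
  have closed_eval: "eval_lterm L \<gamma> t \<in> carrier L" for t
    using closed by (rule eval_lterm_closed)
  from \<open>lcong R s t\<close> show ?thesis
  proof (induction rule: lcong.induct)
    case (rel s t) then show ?case using assms by blast
  next
    case (add_comm s t) then show ?case using add_commute closed_eval by simp
  qed \<comment> \<open>the case names of \<open>lcong.induct\<close> shadow \<open>add_assoc\<close>, \<open>add_neg\<close> and \<open>jacobi\<close>\<close>
    (simp_all add: closed_eval local.add_assoc local.add_neg smult_add_right smult_add_left
      bracket_add_left bracket_add_right local.jacobi)
qed

lemma presented_lie_hom:
  assumes closed: "\<And>x. \<gamma> x \<in> carrier L"
    and rel: "\<And>s t. (s, t) \<in> R \<Longrightarrow> eval_lterm L \<gamma> s = eval_lterm L \<gamma> t"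
  obtains \<phi> where "lie_hom (presented_lie R) L \<phi>" "\<And>t. \<phi> (lclass R t) = eval_lterm L \<gamma> t"
proof
  define \<phi> where "\<phi> A = eval_lterm L \<gamma> (SOME t. t \<in> A)" for A
  show \<phi>: "\<phi> (lclass R t) = eval_lterm L \<gamma> t" for t
  proof -
    have "lcong R t (SOME s. s \<in> lclass R t)"
      using someI[of "\<lambda>s. s \<in> lclass R t", OF lclass_self] unfolding lclass_def by simp
    then show ?thesis unfolding \<phi>_def using eval_lterm_lcong[OF closed rel] by metis
  qed
  have "carrier (presented_lie R) = range (lclass R)" unfolding presented_lie_def by simp
  then show "lie_hom (presented_lie R) L \<phi>"
    unfolding lie_hom_def
    by (auto simp: \<phi> presented_lie_add presented_lie_bracket presented_lie_smult eval_lterm_closed closed)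
qed

end

section \<open>The Cartan matrices\<close>

lemma D_cartan_sym: "D_cartan n i j = D_cartan n j i"
  unfolding D_cartan_def by auto

lemma M_mat_sym: "M_mat n i j = M_mat n j i"
  unfolding M_mat_def by auto

lemma M_mat_eq_D_cartan: "1 \<le> i \<Longrightarrow> i < n \<Longrightarrow> 1 \<le> j \<Longrightarrow> j < n \<Longrightarrow> M_mat n i j = D_cartan n i j"
  unfolding M_mat_def D_cartan_def by auto

lemma D_cartan_off_diagonal: "i \<noteq> j \<Longrightarrow> D_cartan n i j = 0 \<or> D_cartan n i j = -1"
  unfolding D_cartan_def by auto

lemma M_mat_last_column: "2 \<le> i \<Longrightarrow> i < n \<Longrightarrow> M_mat n i n = (if i = n - 1 then -1 else 0)"
  unfolding M_mat_def by auto

lemma M_mat_last_row: "2 \<le> i \<Longrightarrow> i < n \<Longrightarrow> M_mat n n i = (if i = n - 1 then -1 else 0)"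
  unfolding M_mat_def by auto

lemma M_mat_corner: "3 \<le> n \<Longrightarrow> M_mat n 1 n = 1" "3 \<le> n \<Longrightarrow> M_mat n n 1 = 1"
  unfolding M_mat_def by auto

lemma M_mat_nonpos_last_column: "3 \<le> n \<Longrightarrow> 1 \<le> i \<Longrightarrow> M_mat n i n \<le> 0 \<Longrightarrow> 2 \<le> i"
  using M_mat_corner(1)[of n] by (cases "i = 1") auto

lemma M_mat_nonpos_last_row: "3 \<le> n \<Longrightarrow> 1 \<le> j \<Longrightarrow> M_mat n n j \<le> 0 \<Longrightarrow> 2 \<le> j"
  using M_mat_nonpos_last_column M_mat_sym by metis

lemma M_mat_diagonal: "M_mat n i i = 2"
  unfolding M_mat_def by auto

lemma M_mat_positive_off_diagonal:
  "i \<noteq> j \<Longrightarrow> 0 < M_mat n i j \<Longrightarrow> (i = 1 \<and> j = n) \<or> (i = n \<and> j = 1)"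
  unfolding M_mat_def by (auto split: if_splits)

lemma M_mat_last_column_sum: "3 \<le> n \<Longrightarrow> (\<Sum>k\<in>{2..<n}. M_mat n k n) = -1"
  by (simp add: M_mat_last_column sum.If_cases)

text \<open>\<open>chain_pairing n m i\<close> is \<open>\<langle>\<alpha>\<^sub>n + \<alpha>\<^sub>2 + \<dots> + \<alpha>\<^sub>m\<^sub>-\<^sub>1, \<alpha>\<^sub>i\<^sup>\<or>\<rangle>\<close>, the eigenvalue of
  \<open>-ad h\<^sub>i\<close> on the bracket \<open>[f\<^sub>m\<^sub>-\<^sub>1, [\<dots>, [f\<^sub>2, f\<^sub>n]]]\<close>.\<close>

definition chain_pairing :: "nat \<Rightarrow> nat \<Rightarrow> nat \<Rightarrow> int" where
  "chain_pairing n m i = D_cartan n i n + (\<Sum>k\<in>{2..<m}. D_cartan n i k)"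

lemma chain_pairing_transpose: "chain_pairing n m i = D_cartan n n i + (\<Sum>k\<in>{2..<m}. D_cartan n k i)"
  unfolding chain_pairing_def by (simp add: D_cartan_sym)

lemma chain_pairing_expand:
  assumes "1 \<le> i" "i \<le> n" "m \<le> n"
  shows "chain_pairing n m i = D_cartan n i n + (if i \<in> {2..<m} then 2 else 0)
    + (if i + 1 \<in> {2..<m} then (if i + 1 < n then -1 else 0) else 0)
    + (if i - 1 \<in> {2..<m} then (if i < n then -1 else 0) else 0)
    + (if 2 \<in> {2..<m} then (if i = n then -1 else 0) else 0)"
proof -
  have "(\<Sum>k\<in>{2..<m}. D_cartan n i k) = (\<Sum>k\<in>{2..<m}. (if k = i then 2 else 0)
      + (if k = i + 1 then (if i + 1 < n then -1 else 0) else 0)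
      + (if k = i - 1 then (if i < n then -1 else 0) else 0)
      + (if k = 2 then (if i = n then -1 else 0) else 0))"
    using assms by (intro sum.cong) (auto simp: D_cartan_def)
  then show ?thesis
    unfolding chain_pairing_def
    by (simp only: sum.distrib sum.delta sum.delta' finite_atLeastLessThan add.assoc)
qed

lemma chain_pairing_diagonal: "2 \<le> m \<Longrightarrow> m < n \<Longrightarrow> chain_pairing n m m = -1"
  by (subst chain_pairing_expand) (auto simp: D_cartan_def)

lemma chain_pairing_full: "3 \<le> n \<Longrightarrow> 1 \<le> i \<Longrightarrow> i < n \<Longrightarrow> chain_pairing n n i = - M_mat n i n"
  by (subst chain_pairing_expand) (auto simp: D_cartan_def M_mat_def)

lemma chain_pairing_full_diagonal: "3 \<le> n \<Longrightarrow> chain_pairing n n n = 1"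
  by (subst chain_pairing_expand) (auto simp: D_cartan_def)

section \<open>Nested brackets of Chevalley generators of type \<open>D\<^sub>n\<close>\<close>

text \<open>Only the Chevalley--Serre relations of \<open>chevalley_generators\<close> are used below, neither
  simplicity nor generation.\<close>

locale D_chevalley = lie +
  fixes n :: nat and e f h :: "nat \<Rightarrow> 'a"
  assumes n_ge_3: "3 \<le> n"
    and e_closed: "1 \<le> i \<Longrightarrow> i \<le> n \<Longrightarrow> e i \<in> carrier L"
    and f_closed: "1 \<le> i \<Longrightarrow> i \<le> n \<Longrightarrow> f i \<in> carrier L"
    and h_closed: "1 \<le> i \<Longrightarrow> i \<le> n \<Longrightarrow> h i \<in> carrier L"
    and e_f_bracket: "1 \<le> i \<Longrightarrow> i \<le> n \<Longrightarrow> 1 \<le> j \<Longrightarrow> j \<le> n \<Longrightarrow>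
      \<lbrakk>e i, f j\<rbrakk> = (if i = j then h i else \<zero>)"
    and h_e_bracket: "1 \<le> i \<Longrightarrow> i \<le> n \<Longrightarrow> 1 \<le> j \<Longrightarrow> j \<le> n \<Longrightarrow>
      \<lbrakk>h i, e j\<rbrakk> = of_int (D_cartan n i j) \<odot> e j"
    and h_f_bracket: "1 \<le> i \<Longrightarrow> i \<le> n \<Longrightarrow> 1 \<le> j \<Longrightarrow> j \<le> n \<Longrightarrow>
      \<lbrakk>h i, f j\<rbrakk> = of_int (- D_cartan n i j) \<odot> f j"
    and serre_e_0: "1 \<le> i \<Longrightarrow> i \<le> n \<Longrightarrow> 1 \<le> j \<Longrightarrow> j \<le> n \<Longrightarrow> i \<noteq> j \<Longrightarrow> D_cartan n i j = 0 \<Longrightarrow>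
      \<lbrakk>e i, e j\<rbrakk> = \<zero>"
    and serre_e_1: "1 \<le> i \<Longrightarrow> i \<le> n \<Longrightarrow> 1 \<le> j \<Longrightarrow> j \<le> n \<Longrightarrow> i \<noteq> j \<Longrightarrow> D_cartan n i j = -1 \<Longrightarrow>
      \<lbrakk>e i, \<lbrakk>e i, e j\<rbrakk>\<rbrakk> = \<zero>"
    and serre_f_0: "1 \<le> i \<Longrightarrow> i \<le> n \<Longrightarrow> 1 \<le> j \<Longrightarrow> j \<le> n \<Longrightarrow> i \<noteq> j \<Longrightarrow> D_cartan n i j = 0 \<Longrightarrow>
      \<lbrakk>f i, f j\<rbrakk> = \<zero>"
    and serre_f_1: "1 \<le> i \<Longrightarrow> i \<le> n \<Longrightarrow> 1 \<le> j \<Longrightarrow> j \<le> n \<Longrightarrow> i \<noteq> j \<Longrightarrow> D_cartan n i j = -1 \<Longrightarrow>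
      \<lbrakk>f i, \<lbrakk>f i, f j\<rbrakk>\<rbrakk> = \<zero>"
begin

definition fchain :: "nat \<Rightarrow> 'a" where
  "fchain m = foldl (\<lambda>acc k. \<lbrakk>f k, acc\<rbrakk>) (f n) [2..<m]"

lemma fchain_2 [simp]: "fchain 2 = f n"
  unfolding fchain_def by simp

lemma fchain_Suc: "2 \<le> m \<Longrightarrow> fchain (Suc m) = \<lbrakk>f m, fchain m\<rbrakk>"
  unfolding fchain_def by (simp add: upt_Suc_append)

lemma fchain_closed: "2 \<le> m \<Longrightarrow> m \<le> n \<Longrightarrow> fchain m \<in> carrier L"
  by (induction m rule: dec_induct) (use f_closed n_ge_3 fchain_Suc in simp_all)

lemma bracket_fchain_zero:
  assumes "a \<in> carrier L" "\<lbrakk>a, f n\<rbrakk> = \<zero>" "\<And>k. 2 \<le> k \<Longrightarrow> k < m \<Longrightarrow> \<lbrakk>a, f k\<rbrakk> = \<zero>"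
    and "2 \<le> m" "m \<le> n"
  shows "\<lbrakk>a, fchain m\<rbrakk> = \<zero>"
  using assms(4-) assms(3)
proof (induction m rule: dec_induct)
  case base then show ?case using assms(2) by simp
next
  case (step m)
  then show ?case
    using fchain_Suc[of m] centralizer_bracket_closed[of a "f m" "fchain m"] assms(1) f_closed fchain_closed
    by simp
qed

lemma bracket_fchain_weight:
  assumes "a \<in> carrier L" "\<lbrakk>a, f n\<rbrakk> = w n \<odot> f n" "\<And>k. 2 \<le> k \<Longrightarrow> k < m \<Longrightarrow> \<lbrakk>a, f k\<rbrakk> = w k \<odot> f k"
    and "2 \<le> m" "m \<le> n"
  shows "\<lbrakk>a, fchain m\<rbrakk> = (w n + (\<Sum>k\<in>{2..<m}. w k)) \<odot> fchain m"
  using assms(4-) assms(3)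
proof (induction m rule: dec_induct)
  case base then show ?case using assms(2) by simp
next
  case (step m)
  then have "\<lbrakk>a, fchain (Suc m)\<rbrakk> = (w m + (w n + (\<Sum>k\<in>{2..<m}. w k))) \<odot> fchain (Suc m)"
    using bracket_weight_add[of a "f m" "fchain m"] fchain_Suc[of m] assms(1) f_closed fchain_closed by simp
  then show ?case using step by (simp add: sum.atLeastLessThan_Suc algebra_simps)
qed

lemma bracket_h_fchain:
  assumes "1 \<le> i" "i \<le> n" "2 \<le> m" "m \<le> n"
  shows "\<lbrakk>h i, fchain m\<rbrakk> = of_int (- chain_pairing n m i) \<odot> fchain m"
proof -
  have "\<lbrakk>h i, fchain m\<rbrakk> = (of_int (- D_cartan n i n) + (\<Sum>k\<in>{2..<m}. of_int (- D_cartan n i k))) \<odot> fchain m"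
    using assms by (intro bracket_fchain_weight h_closed h_f_bracket) auto
  then show ?thesis unfolding chain_pairing_def by (simp add: sum_negf)
qed

lemma bracket_h_fchain_M: "1 \<le> i \<Longrightarrow> i < n \<Longrightarrow> \<lbrakk>h i, fchain n\<rbrakk> = of_int (M_mat n i n) \<odot> fchain n"
  using bracket_h_fchain[of i n] chain_pairing_full n_ge_3 by simp

lemma bracket_h_n_fchain: "\<lbrakk>h n, fchain n\<rbrakk> = (-1) \<odot> fchain n"
  using bracket_h_fchain[of n n] chain_pairing_full_diagonal n_ge_3 by simp

lemma bracket_e_fchain_Suc: "2 \<le> m \<Longrightarrow> m < n \<Longrightarrow> \<lbrakk>e m, fchain (Suc m)\<rbrakk> = fchain m"
proof -
  assume m: "2 \<le> m" "m < n"
  then have "\<lbrakk>e m, fchain m\<rbrakk> = \<zero>" by (intro bracket_fchain_zero e_closed) (auto simp: e_f_bracket)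
  moreover have "\<lbrakk>h m, fchain m\<rbrakk> = fchain m"
    using bracket_h_fchain[of m m] chain_pairing_diagonal m fchain_closed by simp
  ultimately show ?thesis
    using bracket_leibniz[of "e m" "f m" "fchain m"] fchain_Suc[of m] m e_closed f_closed fchain_closed
      e_f_bracket
    by simp
qed

lemma bracket_e_fchain: "1 \<le> i \<Longrightarrow> i + 2 \<le> n \<Longrightarrow> \<lbrakk>e i, fchain n\<rbrakk> = \<zero>"
proof (cases "i = 1")
  case True
  then show "\<lbrakk>e i, fchain n\<rbrakk> = \<zero>"
    using n_ge_3 by (intro bracket_fchain_zero e_closed) (auto simp: e_f_bracket)
next
  assume i: "i \<noteq> 1" "1 \<le> i" "i + 2 \<le> n"
  have "\<lbrakk>e i, fchain m\<rbrakk> = \<zero>" if "i + 2 \<le> m" "m \<le> n" for m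
    using that
  proof (induction m rule: dec_induct)
    case base
    have "\<lbrakk>f (Suc i), fchain i\<rbrakk> = \<zero>"
      using i by (intro bracket_fchain_zero f_closed serre_f_0) (auto simp: D_cartan_def)
    then show ?case
      using bracket_leibniz[of "e i" "f (Suc i)" "fchain (Suc i)"] bracket_e_fchain_Suc[of i]
        fchain_Suc[of "Suc i"] i e_closed f_closed fchain_closed e_f_bracket
      by simp
  next
    case (step m)
    then show ?case
      using centralizer_bracket_closed[of "e i" "f m" "fchain m"] fchain_Suc[of m] i e_closed f_closed
        fchain_closed e_f_bracket
      by simp
  qed
  then show "\<lbrakk>e i, fchain n\<rbrakk> = \<zero>" using i by simp
qed

lemma ad_f_sq_fchain: "2 \<le> m \<Longrightarrow> m < n \<Longrightarrow> \<lbrakk>f m, \<lbrakk>f m, fchain m\<rbrakk>\<rbrakk> = \<zero>"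
proof (induction m rule: dec_induct)
  case base
  then show ?case using serre_f_1[of 2 n] by (simp add: D_cartan_def)
next
  case (step m)
  have "\<lbrakk>f (Suc m), fchain m\<rbrakk> = \<zero>"
    using step by (intro bracket_fchain_zero f_closed serre_f_0) (auto simp: D_cartan_def)
  moreover have "\<lbrakk>f (Suc m), \<lbrakk>f (Suc m), f m\<rbrakk>\<rbrakk> = \<zero>"
    using step by (intro serre_f_1) (auto simp: D_cartan_def)
  ultimately show ?case
    using ad_sq_bracket_right_centralized[of "f (Suc m)" "f m" "fchain m"] fchain_Suc[of m] step
      f_closed fchain_closed
    by simp
qed

lemma bracket_f_fchain: "2 \<le> i \<Longrightarrow> i < m \<Longrightarrow> m \<le> n \<Longrightarrow> \<lbrakk>f i, fchain m\<rbrakk> = \<zero>"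
proof (induction m arbitrary: i rule: less_induct)
  case (less m)
  then obtain m' where m': "m = Suc m'" "2 \<le> m'" "i \<le> m'" by (cases m) auto
  have fchain_m: "fchain m = \<lbrakk>f m', fchain m'\<rbrakk>" using fchain_Suc m' by simp
  consider "i = m'" | "m' = Suc i" | "Suc i < m'" using m' by linarith
  then show ?case
  proof cases
    case 1
    then show ?thesis using fchain_m ad_f_sq_fchain[of m'] m' less.prems by simp
  next
    case 2
    have "\<lbrakk>f i, \<lbrakk>f i, fchain i\<rbrakk>\<rbrakk> = \<zero>"
      using less.IH[of m' i] fchain_Suc[of i] 2 less.prems m' by simp
    moreover have "\<lbrakk>f (Suc i), fchain i\<rbrakk> = \<zero>"
      using 2 m' less.prems by (intro bracket_fchain_zero f_closed serre_f_0) (auto simp: D_cartan_def)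
    moreover have "\<lbrakk>f i, \<lbrakk>f i, f (Suc i)\<rbrakk>\<rbrakk> = \<zero>"
      using 2 m' less.prems by (intro serre_f_1) (auto simp: D_cartan_def)
    ultimately show ?thesis
      using ad_a_ad_b_ad_a_zero[of "f i" "f (Suc i)" "fchain i"] fchain_m fchain_Suc[of i] 2 m' less.prems
        f_closed fchain_closed
      by simp
  next
    case 3
    have "\<lbrakk>f i, f m'\<rbrakk> = \<zero>" using 3 less.prems m' by (intro serre_f_0) (auto simp: D_cartan_def)
    moreover have "\<lbrakk>f i, fchain m'\<rbrakk> = \<zero>" using less 3 m' by simp
    ultimately show ?thesis
      using centralizer_bracket_closed[of "f i" "f m'" "fchain m'"] fchain_m less.prems m'
        f_closed fchain_closed
      by simp
  qed
qed

lemma bracket_fchain_fchain_Suc: "2 \<le> m \<Longrightarrow> Suc m \<le> n \<Longrightarrow> \<lbrakk>fchain m, fchain (Suc m)\<rbrakk> = \<zero>"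
proof (induction m rule: dec_induct)
  case base
  have "\<lbrakk>f n, \<lbrakk>f n, f 2\<rbrakk>\<rbrakk> = \<zero>" using serre_f_1[of n 2] n_ge_3 by (simp add: D_cartan_def)
  then show ?case
    using fchain_Suc[of 2] bracket_antisym[of "f 2" "f n"] f_closed n_ge_3 by simp
next
  case (step m)
  have "\<lbrakk>f (Suc m), fchain m\<rbrakk> = \<zero>"
    using step by (intro bracket_fchain_zero f_closed serre_f_0) (auto simp: D_cartan_def)
  moreover have "\<lbrakk>f m, \<lbrakk>f m, f (Suc m)\<rbrakk>\<rbrakk> = \<zero>" using step by (intro serre_f_1) (auto simp: D_cartan_def)
  moreover have "\<lbrakk>fchain m, \<lbrakk>f m, fchain m\<rbrakk>\<rbrakk> = \<zero>" using step fchain_Suc by simp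
  ultimately show ?case
    using bracket_ad_a_ad_b_ad_a_zero[of "f m" "f (Suc m)" "fchain m"] fchain_Suc[of m] fchain_Suc[of "Suc m"]
      step f_closed fchain_closed
    by simp
qed

lemma ad_e_sq_fchain: "\<lbrakk>e (n - 1), \<lbrakk>e (n - 1), fchain n\<rbrakk>\<rbrakk> = \<zero>"
proof -
  have "\<lbrakk>e (n - 1), fchain n\<rbrakk> = fchain (n - 1)" using bracket_e_fchain_Suc[of "n - 1"] n_ge_3 by simp
  moreover have "\<lbrakk>e (n - 1), fchain (n - 1)\<rbrakk> = \<zero>"
    using n_ge_3 by (intro bracket_fchain_zero e_closed) (auto simp: e_f_bracket)
  ultimately show ?thesis by simp
qed

lemma ad_fchain_sq_e: "\<lbrakk>fchain n, \<lbrakk>fchain n, e (n - 1)\<rbrakk>\<rbrakk> = \<zero>"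
proof -
  have "\<lbrakk>fchain n, e (n - 1)\<rbrakk> = (-1) \<odot> fchain (n - 1)"
    using bracket_antisym[of "fchain n" "e (n - 1)"] bracket_e_fchain_Suc[of "n - 1"] e_closed fchain_closed
      n_ge_3
    by simp
  moreover have "\<lbrakk>fchain (n - 1), fchain n\<rbrakk> = \<zero>" using bracket_fchain_fchain_Suc[of "n - 1"] n_ge_3 by simp
  ultimately show ?thesis using bracket_zero_commute fchain_closed n_ge_3 by simp
qed

lemma ad_f1_sq_fchain: "3 \<le> m \<Longrightarrow> m \<le> n \<Longrightarrow> \<lbrakk>f 1, \<lbrakk>f 1, fchain m\<rbrakk>\<rbrakk> = \<zero>"
proof (induction m rule: dec_induct)
  case base
  have "\<lbrakk>f 1, f n\<rbrakk> = \<zero>" using n_ge_3 by (intro serre_f_0) (auto simp: D_cartan_def)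
  moreover have "\<lbrakk>f 1, \<lbrakk>f 1, f 2\<rbrakk>\<rbrakk> = \<zero>" using n_ge_3 by (intro serre_f_1) (auto simp: D_cartan_def)
  ultimately show ?case
    using ad_sq_bracket_right_centralized[of "f 1" "f 2" "f n"] fchain_Suc[of 2] n_ge_3 f_closed
    by (simp add: numeral_3_eq_3)
next
  case (step m)
  have "\<lbrakk>f 1, f m\<rbrakk> = \<zero>" using step by (intro serre_f_0) (auto simp: D_cartan_def)
  then show ?case
    using ad_sq_bracket_left_centralized[of "f 1" "f m" "fchain m"] fchain_Suc[of m] step f_closed fchain_closed
    by simp
qed

lemma ad_fchain_sq_f1: "3 \<le> m \<Longrightarrow> m \<le> n \<Longrightarrow> \<lbrakk>fchain m, \<lbrakk>fchain m, f 1\<rbrakk>\<rbrakk> = \<zero>"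
proof (induction m rule: dec_induct)
  case base
  have fchain_3: "fchain 3 = \<lbrakk>f 2, f n\<rbrakk>" using fchain_Suc[of 2] by (simp add: numeral_3_eq_3)
  have "\<lbrakk>f 1, f n\<rbrakk> = \<zero>" using n_ge_3 by (intro serre_f_0) (auto simp: D_cartan_def)
  moreover have "\<lbrakk>f 2, \<lbrakk>f 2, f 1\<rbrakk>\<rbrakk> = \<zero>" using n_ge_3 by (intro serre_f_1) (auto simp: D_cartan_def)
  moreover have "\<lbrakk>f n, \<lbrakk>f 2, f n\<rbrakk>\<rbrakk> = \<zero>"
    using bracket_fchain_fchain_Suc[of 2] n_ge_3 fchain_3 by (simp add: numeral_3_eq_3)
  ultimately have "\<lbrakk>fchain 3, \<lbrakk>f 1, fchain 3\<rbrakk>\<rbrakk> = \<zero>"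
    using bracket_ad_a_ad_b_ad_a_zero[of "f 2" "f 1" "f n"] fchain_3 f_closed n_ge_3 by simp
  then show ?case
    using bracket_antisym[of "fchain 3" "f 1"] fchain_closed[of 3] f_closed n_ge_3 by simp
next
  case (step m)
  define a T where "a = f m" and "T = fchain m"
  have carrier: "a \<in> carrier L" "T \<in> carrier L" "f 1 \<in> carrier L"
    using step f_closed fchain_closed unfolding a_def T_def by auto
  have a1: "\<lbrakk>a, f 1\<rbrakk> = \<zero>" unfolding a_def using step by (intro serre_f_0) (auto simp: D_cartan_def)
  have aaT: "\<lbrakk>a, \<lbrakk>a, T\<rbrakk>\<rbrakk> = \<zero>" unfolding a_def T_def using ad_f_sq_fchain step by simp
  have "\<lbrakk>a, \<lbrakk>a, \<lbrakk>T, f 1\<rbrakk>\<rbrakk>\<rbrakk> = \<zero>"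
    using ad_sq_bracket_right_centralized[of a T "f 1"] carrier a1 aaT by simp
  moreover have "\<lbrakk>a, \<lbrakk>a, \<lbrakk>T, \<lbrakk>T, f 1\<rbrakk>\<rbrakk>\<rbrakk>\<rbrakk> = \<zero>" using step carrier unfolding T_def by simp
  ultimately have "\<lbrakk>\<lbrakk>a, T\<rbrakk>, \<lbrakk>a, \<lbrakk>T, f 1\<rbrakk>\<rbrakk>\<rbrakk> = \<zero>"
    using bracket_ad_ad_zero[OF _ _ _ aaT] carrier by simp
  moreover have "\<lbrakk>\<lbrakk>a, T\<rbrakk>, f 1\<rbrakk> = \<lbrakk>a, \<lbrakk>T, f 1\<rbrakk>\<rbrakk>" using bracket_leibniz[of a T "f 1"] carrier a1 by simp
  ultimately show ?case using fchain_Suc step unfolding a_def T_def by simp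
qed

end

text \<open>Reversing the bracket exchanges the roles of \<open>e\<close> and \<open>f\<close>; every fact about \<open>fchain\<close> thus
  yields one about \<open>echain\<close>.\<close>

lemma (in D_chevalley) D_chevalley_opposite: "D_chevalley (opposite_lie L) n f e h"
proof (unfold_locales, unfold opposite_lie_simps)
  show "lie_algebra (opposite_lie L)" by (rule lie_algebra_opposite)
  fix i j assume ij: "1 \<le> i" "i \<le> n" "1 \<le> j" "j \<le> n"
  show "\<lbrakk>e j, f i\<rbrakk> = (if i = j then h i else \<zero>)" using e_f_bracket[of j i] ij by auto
  show "\<lbrakk>f j, h i\<rbrakk> = of_int (D_cartan n i j) \<odot> f j"
    using bracket_antisym[of "f j" "h i"] h_f_bracket[of i j] f_closed h_closed ij by simp
  show "\<lbrakk>e j, h i\<rbrakk> = of_int (- D_cartan n i j) \<odot> e j"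
    using bracket_antisym[of "e j" "h i"] h_e_bracket[of i j] e_closed h_closed ij by simp
  assume "i \<noteq> j"
  show "\<lbrakk>f j, f i\<rbrakk> = \<zero>" if "D_cartan n i j = 0"
    using bracket_zero_commute serre_f_0[of i j] f_closed ij that \<open>i \<noteq> j\<close> by blast
  show "\<lbrakk>\<lbrakk>f j, f i\<rbrakk>, f i\<rbrakk> = \<zero>" if "D_cartan n i j = -1"
    using bracket_swap_twice[of "f i" "f j"] serre_f_1[of i j] f_closed ij that \<open>i \<noteq> j\<close> by simp
  show "\<lbrakk>e j, e i\<rbrakk> = \<zero>" if "D_cartan n i j = 0"
    using bracket_zero_commute serre_e_0[of i j] e_closed ij that \<open>i \<noteq> j\<close> by blast
  show "\<lbrakk>\<lbrakk>e j, e i\<rbrakk>, e i\<rbrakk> = \<zero>" if "D_cartan n i j = -1"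
    using bracket_swap_twice[of "e i" "e j"] serre_e_1[of i j] e_closed ij that \<open>i \<noteq> j\<close> by simp
qed (use n_ge_3 e_closed f_closed h_closed in auto)

context D_chevalley
begin

interpretation opposite: D_chevalley "opposite_lie L" n f e h
  by (rule D_chevalley_opposite)

definition echain :: "nat \<Rightarrow> 'a" where
  "echain m = foldl (\<lambda>acc k. \<lbrakk>acc, e k\<rbrakk>) (e n) [2..<m]"

lemma opposite_fchain: "opposite.fchain m = echain m"
  unfolding opposite.fchain_def echain_def by simp

lemma echain_Suc: "2 \<le> m \<Longrightarrow> echain (Suc m) = \<lbrakk>echain m, e m\<rbrakk>"
  unfolding echain_def by (simp add: upt_Suc_append)

lemma echain_closed: "2 \<le> m \<Longrightarrow> m \<le> n \<Longrightarrow> echain m \<in> carrier L"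
  using opposite.fchain_closed opposite_fchain by simp

lemma bracket_echain_zero:
  assumes "a \<in> carrier L" "\<lbrakk>e n, a\<rbrakk> = \<zero>" "\<And>k. 2 \<le> k \<Longrightarrow> k < m \<Longrightarrow> \<lbrakk>e k, a\<rbrakk> = \<zero>"
    and "2 \<le> m" "m \<le> n"
  shows "\<lbrakk>echain m, a\<rbrakk> = \<zero>"
  using opposite.bracket_fchain_zero[of a m] assms opposite_fchain by simp

lemma bracket_echain_e: "2 \<le> i \<Longrightarrow> i < n \<Longrightarrow> \<lbrakk>echain n, e i\<rbrakk> = \<zero>"
  using opposite.bracket_f_fchain[of i n] opposite_fchain by simp

lemma bracket_e_echain: "2 \<le> i \<Longrightarrow> i < n \<Longrightarrow> \<lbrakk>e i, echain n\<rbrakk> = \<zero>"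
  using bracket_zero_commute[OF _ _ bracket_echain_e] e_closed echain_closed n_ge_3 by simp

lemma bracket_echain_f: "1 \<le> i \<Longrightarrow> i + 2 \<le> n \<Longrightarrow> \<lbrakk>echain n, f i\<rbrakk> = \<zero>"
  using opposite.bracket_e_fchain[of i] opposite_fchain by simp

lemma ad_f_sq_echain: "\<lbrakk>f (n - 1), \<lbrakk>f (n - 1), echain n\<rbrakk>\<rbrakk> = \<zero>"
  using opposite.ad_e_sq_fchain bracket_swap_twice f_closed echain_closed n_ge_3 opposite_fchain by simp

lemma ad_echain_sq_f: "\<lbrakk>echain n, \<lbrakk>echain n, f (n - 1)\<rbrakk>\<rbrakk> = \<zero>"
  using opposite.ad_fchain_sq_e bracket_swap_twice f_closed echain_closed n_ge_3 opposite_fchain by simp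

lemma ad_e1_sq_echain: "\<lbrakk>e 1, \<lbrakk>e 1, echain n\<rbrakk>\<rbrakk> = \<zero>"
  using opposite.ad_f1_sq_fchain[of n] bracket_swap_twice e_closed echain_closed n_ge_3 opposite_fchain
  by simp

lemma ad_echain_sq_e1: "\<lbrakk>echain n, \<lbrakk>echain n, e 1\<rbrakk>\<rbrakk> = \<zero>"
  using opposite.ad_fchain_sq_f1[of n] bracket_swap_twice e_closed echain_closed n_ge_3 opposite_fchain
  by simp

lemma bracket_h_echain:
  assumes "1 \<le> i" "i \<le> n" "2 \<le> m" "m \<le> n"
  shows "\<lbrakk>h i, echain m\<rbrakk> = of_int (chain_pairing n m i) \<odot> echain m"
  using opposite.bracket_h_fchain[OF assms] bracket_antisym[of "h i" "echain m"] h_closed echain_closed assms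
    opposite_fchain
  by simp

definition hsum :: "nat \<Rightarrow> 'a" where
  "hsum m = foldl (\<lambda>acc k. acc \<oplus> h k) (h n) [2..<m]"

lemma hsum_Suc: "2 \<le> m \<Longrightarrow> hsum (Suc m) = hsum m \<oplus> h m"
  unfolding hsum_def by (simp add: upt_Suc_append)

lemma hsum_closed: "2 \<le> m \<Longrightarrow> m \<le> n \<Longrightarrow> hsum m \<in> carrier L"
proof (induction m rule: dec_induct)
  case base then show ?case using h_closed n_ge_3 by (simp add: hsum_def)
next
  case (step m) then show ?case using h_closed hsum_Suc by simp
qed

lemma bracket_hsum_weight:
  assumes z: "z \<in> carrier L" and "\<lbrakk>h n, z\<rbrakk> = w n \<odot> z"
    and "\<And>k. 2 \<le> k \<Longrightarrow> k < m \<Longrightarrow> \<lbrakk>h k, z\<rbrakk> = w k \<odot> z"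
    and "2 \<le> m" "m \<le> n"
  shows "\<lbrakk>hsum m, z\<rbrakk> = (w n + (\<Sum>k\<in>{2..<m}. w k)) \<odot> z"
  using assms(4-) assms(3)
proof (induction m rule: dec_induct)
  case base then show ?case using assms(2) by (simp add: hsum_def)
next
  case (step m)
  have "\<lbrakk>hsum (Suc m), z\<rbrakk> = (w n + (\<Sum>k\<in>{2..<m}. w k)) \<odot> z \<oplus> w m \<odot> z"
    using hsum_Suc[of m] bracket_add_left[of "hsum m" "h m" z] step z h_closed hsum_closed by simp
  then show ?case using step z by (simp add: smult_add_left[symmetric] sum.atLeastLessThan_Suc add.assoc)
qed

lemma bracket_hsum_e:
  assumes "1 \<le> j" "j \<le> n" "2 \<le> m" "m \<le> n"
  shows "\<lbrakk>hsum m, e j\<rbrakk> = of_int (chain_pairing n m j) \<odot> e j"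
proof -
  have "\<lbrakk>hsum m, e j\<rbrakk> = (of_int (D_cartan n n j) + (\<Sum>k\<in>{2..<m}. of_int (D_cartan n k j))) \<odot> e j"
    using assms by (intro bracket_hsum_weight e_closed h_e_bracket) auto
  then show ?thesis by (simp add: chain_pairing_transpose)
qed

lemma bracket_hsum_f:
  assumes "1 \<le> j" "j \<le> n" "2 \<le> m" "m \<le> n"
  shows "\<lbrakk>hsum m, f j\<rbrakk> = of_int (- chain_pairing n m j) \<odot> f j"
proof -
  have "\<lbrakk>hsum m, f j\<rbrakk> = (of_int (- D_cartan n n j) + (\<Sum>k\<in>{2..<m}. of_int (- D_cartan n k j))) \<odot> f j"
    using assms by (intro bracket_hsum_weight f_closed h_f_bracket) auto
  then show ?thesis by (simp add: chain_pairing_transpose sum_negf)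
qed

lemma bracket_fchain_echain: "2 \<le> m \<Longrightarrow> m \<le> n \<Longrightarrow> \<lbrakk>fchain m, echain m\<rbrakk> = (-1) \<odot> hsum m"
proof (induction m rule: dec_induct)
  case base
  then show ?case
    using bracket_antisym[of "f n" "e n"] e_f_bracket[of n n] e_closed f_closed n_ge_3
    by (simp add: fchain_def echain_def hsum_def)
next
  case (step m)
  define X where "X = fchain (Suc m)"
  have carrier: "X \<in> carrier L" "fchain m \<in> carrier L" "echain m \<in> carrier L" "e m \<in> carrier L"
    "f m \<in> carrier L" "hsum m \<in> carrier L" "h m \<in> carrier L"
    using step fchain_closed echain_closed e_closed f_closed hsum_closed h_closed unfolding X_def by auto
  have Xe: "\<lbrakk>X, e m\<rbrakk> = (-1) \<odot> fchain m"
    using bracket_antisym[of X "e m"] bracket_e_fchain_Suc[of m] step carrier unfolding X_def by simp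
  have ef: "\<lbrakk>echain m, fchain m\<rbrakk> = hsum m"
    using bracket_antisym[of "echain m" "fchain m"] step carrier by simp
  have "\<lbrakk>echain m, f m\<rbrakk> = \<zero>"
    using step by (intro bracket_echain_zero f_closed) (auto simp: e_f_bracket)
  then have "\<lbrakk>echain m, X\<rbrakk> = \<lbrakk>f m, hsum m\<rbrakk>"
    using bracket_leibniz[of "echain m" "f m" "fchain m"] fchain_Suc[of m] carrier ef step
    unfolding X_def by simp
  moreover have "\<lbrakk>hsum m, f m\<rbrakk> = f m"
    using bracket_hsum_f[of m m] chain_pairing_diagonal step f_closed by simp
  ultimately have Xe': "\<lbrakk>X, echain m\<rbrakk> = f m"
    using bracket_antisym[of X "echain m"] bracket_antisym[of "f m" "hsum m"] carrier by simp
  have fe: "\<lbrakk>f m, e m\<rbrakk> = (-1) \<odot> h m"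
    using bracket_antisym[of "f m" "e m"] e_f_bracket[of m m] carrier step by simp
  have "\<lbrakk>X, echain (Suc m)\<rbrakk> = \<lbrakk>\<lbrakk>X, echain m\<rbrakk>, e m\<rbrakk> \<oplus> \<lbrakk>echain m, \<lbrakk>X, e m\<rbrakk>\<rbrakk>"
    using echain_Suc[of m] bracket_leibniz[of X "echain m" "e m"] step carrier by simp
  also have "\<dots> = (-1) \<odot> h m \<oplus> (-1) \<odot> hsum m" using Xe Xe' fe ef carrier by simp
  also have "\<dots> = (-1) \<odot> (hsum m \<oplus> h m)" using smult_add_right add_commute carrier by simp
  finally show ?case using hsum_Suc step X_def by simp
qed

lemma fchain_n_closed: "fchain n \<in> carrier L" using fchain_closed n_ge_3 by simp
lemma echain_n_closed: "echain n \<in> carrier L" using echain_closed n_ge_3 by simp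
lemma hsum_n_closed: "hsum n \<in> carrier L" using hsum_closed n_ge_3 by simp

lemma bracket_h_echain_M: "1 \<le> i \<Longrightarrow> i < n \<Longrightarrow> \<lbrakk>h i, echain n\<rbrakk> = of_int (- M_mat n i n) \<odot> echain n"
  using bracket_h_echain[of i n] chain_pairing_full n_ge_3 by simp

lemma bracket_hsum_fchain: "\<lbrakk>hsum n, fchain n\<rbrakk> = (-2) \<odot> fchain n"
proof -
  define w where "w k = (if k = n then -1 else of_int (M_mat n k n) :: complex)" for k
  have "\<lbrakk>hsum n, fchain n\<rbrakk> = (w n + (\<Sum>k\<in>{2..<n}. w k)) \<odot> fchain n"
    using n_ge_3
    by (intro bracket_hsum_weight fchain_n_closed) (auto simp: w_def bracket_h_n_fchain bracket_h_fchain_M)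
  moreover have "(\<Sum>k\<in>{2..<n}. w k) = -1"
    using M_mat_last_column_sum[OF n_ge_3] unfolding w_def by (simp flip: of_int_sum)
  ultimately show ?thesis by (simp add: w_def)
qed

lemma bracket_hsum_echain: "\<lbrakk>hsum n, echain n\<rbrakk> = 2 \<odot> echain n"
proof -
  define w where "w k = (if k = n then 1 else of_int (- M_mat n k n) :: complex)" for k
  have "\<lbrakk>h n, echain n\<rbrakk> = echain n"
    using bracket_h_echain[of n n] chain_pairing_full_diagonal echain_n_closed n_ge_3 by simp
  then have "\<lbrakk>hsum n, echain n\<rbrakk> = (w n + (\<Sum>k\<in>{2..<n}. w k)) \<odot> echain n"
    using n_ge_3 echain_n_closed
    by (intro bracket_hsum_weight echain_n_closed) (auto simp: w_def bracket_h_echain_M)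
  moreover have "(\<Sum>k\<in>{2..<n}. w k) = 1"
    using M_mat_last_column_sum[OF n_ge_3] unfolding w_def by (simp add: sum_negf flip: of_int_sum)
  ultimately show ?thesis by (simp add: w_def)
qed

definition E :: "nat \<Rightarrow> 'a" where "E i = (if i = n then fchain n else e i)"
definition F :: "nat \<Rightarrow> 'a" where "F i = (if i = n then echain n else f i)"
definition H :: "nat \<Rightarrow> 'a" where "H i = (if i = n then (-1) \<odot> hsum n else h i)"

lemma E_closed: "1 \<le> i \<Longrightarrow> i \<le> n \<Longrightarrow> E i \<in> carrier L"
  unfolding E_def using e_closed fchain_n_closed by simp

lemma F_closed: "1 \<le> i \<Longrightarrow> i \<le> n \<Longrightarrow> F i \<in> carrier L"
  unfolding F_def using f_closed echain_n_closed by simp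

lemma H_closed: "1 \<le> i \<Longrightarrow> i \<le> n \<Longrightarrow> H i \<in> carrier L"
  unfolding H_def using h_closed hsum_n_closed by simp

lemma H_E_bracket:
  assumes "1 \<le> i" "i \<le> n" "1 \<le> j" "j \<le> n"
  shows "\<lbrakk>H i, E j\<rbrakk> = of_int (M_mat n i j) \<odot> E j"
proof -
  consider "i = n" "j = n" | "i = n" "j < n" | "i < n" "j = n" | "i < n" "j < n" using assms by linarith
  then show ?thesis
  proof cases
    case 1 then show ?thesis using bracket_hsum_fchain M_mat_diagonal fchain_n_closed hsum_n_closed
      unfolding E_def H_def by simp
  next
    case 2 then show ?thesis using bracket_hsum_e[of j n] chain_pairing_full M_mat_sym assms n_ge_3 e_closed
      hsum_n_closed unfolding E_def H_def by simp
  next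
    case 3 then show ?thesis using bracket_h_fchain_M assms unfolding E_def H_def by simp
  next
    case 4 then show ?thesis using h_e_bracket M_mat_eq_D_cartan assms unfolding E_def H_def by simp
  qed
qed

lemma H_F_bracket:
  assumes "1 \<le> i" "i \<le> n" "1 \<le> j" "j \<le> n"
  shows "\<lbrakk>H i, F j\<rbrakk> = of_int (- M_mat n i j) \<odot> F j"
proof -
  consider "i = n" "j = n" | "i = n" "j < n" | "i < n" "j = n" | "i < n" "j < n" using assms by linarith
  then show ?thesis
  proof cases
    case 1 then show ?thesis using bracket_hsum_echain M_mat_diagonal echain_n_closed hsum_n_closed
      unfolding F_def H_def by simp
  next
    case 2 then show ?thesis using bracket_hsum_f[of j n] chain_pairing_full M_mat_sym assms n_ge_3 f_closed
      hsum_n_closed unfolding F_def H_def by simp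
  next
    case 3 then show ?thesis using bracket_h_echain_M assms unfolding F_def H_def by simp
  next
    case 4 then show ?thesis using h_f_bracket M_mat_eq_D_cartan assms unfolding F_def H_def by simp
  qed
qed

lemma E_F_bracket_diagonal: "1 \<le> i \<Longrightarrow> i \<le> n \<Longrightarrow> \<lbrakk>E i, F i\<rbrakk> = H i"
  using e_f_bracket[of i i] bracket_fchain_echain n_ge_3 unfolding E_def F_def H_def by simp

lemma cases_nonpos_off_diagonal:
  assumes "1 \<le> i" "i \<le> n" "1 \<le> j" "j \<le> n" "i \<noteq> j" "M_mat n i j \<le> 0"
  obtains "i < n" "j < n" | "2 \<le> i" "i < n" "j = n" | "i = n" "2 \<le> j" "j < n"
  using assms M_mat_nonpos_last_column[OF n_ge_3] M_mat_nonpos_last_row[OF n_ge_3] by fastforce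

lemma E_F_bracket_zero:
  assumes "1 \<le> i" "i \<le> n" "1 \<le> j" "j \<le> n" "i \<noteq> j" "M_mat n i j \<le> 0"
  shows "\<lbrakk>E i, F j\<rbrakk> = \<zero>"
proof (cases rule: cases_nonpos_off_diagonal[OF assms])
  case 1 then show ?thesis using e_f_bracket assms unfolding E_def F_def by simp
next
  case 2 then show ?thesis using bracket_e_echain unfolding E_def F_def by simp
next
  case 3 then show ?thesis
    using bracket_zero_commute[OF _ _ bracket_f_fchain] f_closed fchain_n_closed unfolding E_def F_def by simp
qed

lemma F_E_bracket_zero:
  assumes "1 \<le> i" "i \<le> n" "1 \<le> j" "j \<le> n" "i \<noteq> j" "M_mat n i j \<le> 0"
  shows "\<lbrakk>F i, E j\<rbrakk> = \<zero>"
  using E_F_bracket_zero[of j i] M_mat_sym[of n i j] bracket_zero_commute E_closed F_closed assms by metis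

lemma serre_e_ad_pow:
  "1 \<le> i \<Longrightarrow> i \<le> n \<Longrightarrow> 1 \<le> j \<Longrightarrow> j \<le> n \<Longrightarrow> i \<noteq> j \<Longrightarrow> ad_pow L (nat (1 - D_cartan n i j)) (e i) (e j) = \<zero>"
  using D_cartan_off_diagonal[of i j n] serre_e_0[of i j] serre_e_1[of i j]
  by (auto simp: ad_pow_Suc_0 ad_pow_2)

lemma serre_f_ad_pow:
  "1 \<le> i \<Longrightarrow> i \<le> n \<Longrightarrow> 1 \<le> j \<Longrightarrow> j \<le> n \<Longrightarrow> i \<noteq> j \<Longrightarrow> ad_pow L (nat (1 - D_cartan n i j)) (f i) (f j) = \<zero>"
  using D_cartan_off_diagonal[of i j n] serre_f_0[of i j] serre_f_1[of i j]
  by (auto simp: ad_pow_Suc_0 ad_pow_2)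

lemma serre_e_fchain: "2 \<le> i \<Longrightarrow> i < n \<Longrightarrow> ad_pow L (nat (1 - M_mat n i n)) (e i) (fchain n) = \<zero>"
  using ad_e_sq_fchain bracket_e_fchain[of i]
  by (cases "i = n - 1") (auto simp: M_mat_last_column ad_pow_Suc_0 ad_pow_2)

lemma serre_fchain_e: "2 \<le> j \<Longrightarrow> j < n \<Longrightarrow> ad_pow L (nat (1 - M_mat n n j)) (fchain n) (e j) = \<zero>"
  using ad_fchain_sq_e bracket_zero_commute[OF _ _ bracket_e_fchain[of j]] e_closed fchain_n_closed
  by (cases "j = n - 1") (auto simp: M_mat_last_row ad_pow_Suc_0 ad_pow_2)

lemma serre_f_echain: "2 \<le> i \<Longrightarrow> i < n \<Longrightarrow> ad_pow L (nat (1 - M_mat n i n)) (f i) (echain n) = \<zero>"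
  using ad_f_sq_echain bracket_zero_commute[OF _ _ bracket_echain_f[of i]] f_closed echain_n_closed
  by (cases "i = n - 1") (auto simp: M_mat_last_column ad_pow_Suc_0 ad_pow_2)

lemma serre_echain_f: "2 \<le> j \<Longrightarrow> j < n \<Longrightarrow> ad_pow L (nat (1 - M_mat n n j)) (echain n) (f j) = \<zero>"
  using ad_echain_sq_f bracket_echain_f[of j]
  by (cases "j = n - 1") (auto simp: M_mat_last_row ad_pow_Suc_0 ad_pow_2)

lemma serre_E:
  assumes "1 \<le> i" "i \<le> n" "1 \<le> j" "j \<le> n" "i \<noteq> j" "M_mat n i j \<le> 0"
  shows "ad_pow L (nat (1 - M_mat n i j)) (E i) (E j) = \<zero>"
  by (cases rule: cases_nonpos_off_diagonal[OF assms])
    (use assms in \<open>simp_all add: E_def serre_e_fchain serre_fchain_e serre_e_ad_pow M_mat_eq_D_cartan\<close>)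

lemma serre_F:
  assumes "1 \<le> i" "i \<le> n" "1 \<le> j" "j \<le> n" "i \<noteq> j" "M_mat n i j \<le> 0"
  shows "ad_pow L (nat (1 - M_mat n i j)) (F i) (F j) = \<zero>"
  by (cases rule: cases_nonpos_off_diagonal[OF assms])
    (use assms in \<open>simp_all add: F_def serre_f_echain serre_echain_f serre_f_ad_pow M_mat_eq_D_cartan\<close>)

lemma E_E_bracket_zero: "i \<noteq> j \<Longrightarrow> 0 < M_mat n i j \<Longrightarrow> \<lbrakk>E i, E j\<rbrakk> = \<zero>"
  using M_mat_positive_off_diagonal bracket_e_fchain[of 1] bracket_zero_commute[of "e 1" "fchain n"]
    e_closed fchain_n_closed n_ge_3
  unfolding E_def by fastforce

lemma F_F_bracket_zero: "i \<noteq> j \<Longrightarrow> 0 < M_mat n i j \<Longrightarrow> \<lbrakk>F i, F j\<rbrakk> = \<zero>"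
  using M_mat_positive_off_diagonal bracket_echain_f[of 1] bracket_zero_commute[of "echain n" "f 1"]
    f_closed echain_n_closed n_ge_3
  unfolding F_def by fastforce

lemma ad_E_F_zero: "i \<noteq> j \<Longrightarrow> 0 < M_mat n i j \<Longrightarrow> ad_pow L (nat (M_mat n i j + 1)) (E i) (F j) = \<zero>"
  using M_mat_positive_off_diagonal ad_e1_sq_echain ad_fchain_sq_f1[of n] M_mat_corner n_ge_3
  unfolding E_def F_def by (fastforce simp: ad_pow_2)

lemma ad_F_E_zero: "i \<noteq> j \<Longrightarrow> 0 < M_mat n i j \<Longrightarrow> ad_pow L (nat (M_mat n i j + 1)) (F i) (E j) = \<zero>"
  using M_mat_positive_off_diagonal ad_f1_sq_fchain[of n] ad_echain_sq_e1 M_mat_corner n_ge_3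
  unfolding E_def F_def by (fastforce simp: ad_pow_2)

section \<open>The homomorphism\<close>

text \<open>Generators with index outside \<open>{1..n}\<close> occur in no relation, so their image is arbitrary.\<close>

definition gim_gen_image :: "gim_gen \<Rightarrow> 'a" where
  "gim_gen_image x = (case x of
      GE i \<Rightarrow> if i \<in> {1..n} then E i else \<zero>
    | GF i \<Rightarrow> if i \<in> {1..n} then F i else \<zero>
    | GH i \<Rightarrow> if i \<in> {1..n} then H i else \<zero>)"

lemma gim_gen_image_closed: "gim_gen_image x \<in> carrier L"
  unfolding gim_gen_image_def using E_closed F_closed H_closed by (cases x) auto

lemma gim_rels_respected:
  "(s, t) \<in> gim_rels n (M_mat n) \<Longrightarrow> eval_lterm L gim_gen_image s = eval_lterm L gim_gen_image t"
  unfolding gim_rels_def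
  by (auto simp: gim_gen_image_def eval_lterm_tad_pow H_E_bracket H_F_bracket E_F_bracket_diagonal
      E_F_bracket_zero F_E_bracket_zero serre_E serre_F E_E_bracket_zero F_F_bracket_zero
      ad_E_F_zero ad_F_E_zero)

lemma gim_hom_exists:
  obtains \<phi> where "lie_hom (gim n (M_mat n)) L \<phi>"
    "\<And>x. \<phi> (gim_gen_elt n (M_mat n) x) = gim_gen_image x"
proof -
  obtain \<phi> where "lie_hom (presented_lie (gim_rels n (M_mat n))) L \<phi>"
    "\<And>t. \<phi> (lclass (gim_rels n (M_mat n)) t) = eval_lterm L gim_gen_image t"
    using presented_lie_hom[OF gim_gen_image_closed gim_rels_respected] by blast
  then show ?thesis using that unfolding gim_def gim_gen_elt_def by simp
qed

end

lemma chevalley_generators_D_chevalley: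
  assumes "3 \<le> n" and "chevalley_generators L n (D_cartan n) e f h"
  shows "D_chevalley L n e f h"
proof -
  have "lie_algebra L"
    using assms(2) unfolding chevalley_generators_def simple_lie_algebra_def by blast
  have gens: "\<forall>i\<in>{1..n}. e i \<in> carrier L \<and> f i \<in> carrier L \<and> h i \<in> carrier L"
    and rels: "\<forall>i\<in>{1..n}. \<forall>j\<in>{1..n}.
        lbr L (h i) (h j) = lzero L \<and>
        lbr L (e i) (f j) = (if i = j then h i else lzero L) \<and>
        lbr L (h i) (e j) = lsmul L (of_int (D_cartan n i j)) (e j) \<and>
        lbr L (h i) (f j) = lsmul L (of_int (- D_cartan n i j)) (f j) \<and>
        (i \<noteq> j \<longrightarrow> ad_pow L (nat (1 - D_cartan n i j)) (e i) (e j) = lzero L \<and>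
                   ad_pow L (nat (1 - D_cartan n i j)) (f i) (f j) = lzero L)"
    using assms(2) unfolding chevalley_generators_def by blast+
  show ?thesis
  proof unfold_locales
    fix i j assume ij: "1 \<le> i" "i \<le> n" "1 \<le> j" "j \<le> n"
    note rel = rels[rule_format, of i j, simplified ad_pow_def]
    show "lbr L (e i) (f j) = (if i = j then h i else lzero L)"
      "lbr L (h i) (e j) = lsmul L (of_int (D_cartan n i j)) (e j)"
      "lbr L (h i) (f j) = lsmul L (of_int (- D_cartan n i j)) (f j)"
      using rel ij by auto
    assume "i \<noteq> j"
    show "lbr L (e i) (e j) = lzero L" "lbr L (f i) (f j) = lzero L" if "D_cartan n i j = 0"
      using rel ij \<open>i \<noteq> j\<close> that by auto
    show "lbr L (e i) (lbr L (e i) (e j)) = lzero L" "lbr L (f i) (lbr L (f i) (f j)) = lzero L"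
      if "D_cartan n i j = -1"
      using rel ij \<open>i \<noteq> j\<close> that by (auto simp: numeral_2_eq_2)
  qed (use assms(1) gens \<open>lie_algebra L\<close> in auto)
qed

theorem lemma2p4:
  fixes g :: "('a, 'b) lie_alg_scheme"
    and e f h :: "nat \<Rightarrow> 'a"
    and n :: nat
  assumes "n \<ge> 3"
    and "chevalley_generators g n (D_cartan n) e f h"
  shows "\<exists>\<phi>. lie_hom (gim n (M_mat n)) g \<phi> \<and>
     (\<forall>i\<in>{1..n-1}. \<phi> (gim_gen_elt n (M_mat n) (GE i)) = e i \<and>
                    \<phi> (gim_gen_elt n (M_mat n) (GF i)) = f i) \<and>
     \<phi> (gim_gen_elt n (M_mat n) (GE n)) = foldl (\<lambda>acc k. lbr g (f k) acc) (f n) [2..<n] \<and>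
     \<phi> (gim_gen_elt n (M_mat n) (GF n)) = foldl (\<lambda>acc k. lbr g acc (e k)) (e n) [2..<n]"
proof -
  interpret D_chevalley g n e f h
    using chevalley_generators_D_chevalley[OF assms] .
  obtain \<phi> where "lie_hom (gim n (M_mat n)) g \<phi>"
    and \<phi>: "\<And>x. \<phi> (gim_gen_elt n (M_mat n) x) = gim_gen_image x"
    using gim_hom_exists by blast
  moreover have "\<phi> (gim_gen_elt n (M_mat n) (GE i)) = e i \<and> \<phi> (gim_gen_elt n (M_mat n) (GF i)) = f i"
    if "i \<in> {1..n-1}" for i
    using that by (auto simp: \<phi> gim_gen_image_def E_def F_def)
  moreover have "\<phi> (gim_gen_elt n (M_mat n) (GE n)) = foldl (\<lambda>acc k. lbr g (f k) acc) (f n) [2..<n]"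
    and "\<phi> (gim_gen_elt n (M_mat n) (GF n)) = foldl (\<lambda>acc k. lbr g acc (e k)) (e n) [2..<n]"
    using assms(1) by (simp_all add: \<phi> gim_gen_image_def E_def F_def fchain_def echain_def)
  ultimately show ?thesis by blast
qed

end
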